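(* Let $\mathrm{f}$ be a chief factor function, $G$ a finite group, $K\trianglelefteq G$, and $H/T$ a non-abelian chief factor of $G$ with $K\le T$. Define $Z_1,Z_2$ by $Z_1/K=\mathrm{Z}(G/K,\mathrm{f})\cap T/K$ and $Z_2/K=\mathrm{Z}(G/K,\mathrm{f})\cap H/K$. If $\mathrm{f}(H/T,G)=0$ then $Z_2=Z_1$. If $\mathrm{f}(H/T,G)=1$, let $C$ be the subgroup with $Z_1\le C$ and $C/Z_1=\big(C_{H/Z_1}(T/Z_1)\big)^{\mathfrak{S}}$. Then $Z_2\ne Z_1$ if and only if $|C/Z_1|=|H/T|$, and in that case $Z_2=C$.
   Context: A chief factor function is a function $\mathrm{f}$ assigning $0$ or $1$ to every pair $(H/K,G)$ with $G$ a finite group and $H/K$ a chief factor of $G$, such that: (1) $\mathrm{f}(H/K,G)=\mathrm{f}(M/N,G)$ whenever $H/K$ and $M/N$ are $G$-isomorphic chief factors of $G$; (2) $\mathrm{f}(H/K,G)=\mathrm{f}((H/N)/(K/N),G/N)$ for every $N\trianglelefteq G$ with $N\le K$. $\mathrm{Z}(G,\mathrm{f})$ denotes the greatest normal subgroup of $G$ such that $\mathrm{f}(H/K,G)=1$ for every chief factor $H/K$ of $G$ with $H\le \mathrm{Z}(G,\mathrm{f})$. For a group $X$, $X^{\mathfrak{S}}$ is the soluble residual, i.e. the smallest normal subgroup of $X$ with soluble quotient. *)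

theory Defs
  imports "HOL-Algebra.Algebra"
begin

definition chief_factor :: "'a monoid \<Rightarrow> 'a set \<Rightarrow> 'a set \<Rightarrow> bool" where
  "chief_factor G H K \<longleftrightarrow> H \<lhd> G \<and> K \<lhd> G \<and> K \<subset> H \<and>
     (\<forall>N. N \<lhd> G \<and> K \<subseteq> N \<and> N \<subseteq> H \<longrightarrow> N = K \<or> N = H)"

definition sect :: "'a monoid \<Rightarrow> 'a set \<Rightarrow> 'a set \<Rightarrow> 'a set monoid" where
  "sect G H K = FactGroup (G\<lparr>carrier := H\<rparr>) K"

definition cconj :: "'a monoid \<Rightarrow> 'a \<Rightarrow> 'a set \<Rightarrow> 'a set" where
  "cconj G g Y = (\<lambda>y. monoid.mult G (monoid.mult G (m_inv G g) y) g) ` Y"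

definition G_isomorphic :: "'a monoid \<Rightarrow> 'a set \<Rightarrow> 'a set \<Rightarrow> 'a set \<Rightarrow> 'a set \<Rightarrow> bool" where
  "G_isomorphic G H K M N \<longleftrightarrow> (\<exists>\<phi>. \<phi> \<in> iso (sect G H K) (sect G M N) \<and>
     (\<forall>g \<in> carrier G. \<forall>x \<in> carrier (sect G H K). \<phi> (cconj G g x) = cconj G g (\<phi> x)))"

definition cff_iso_invariant :: "('a monoid \<Rightarrow> 'a set \<Rightarrow> 'a set \<Rightarrow> bool) \<Rightarrow> bool" where
  "cff_iso_invariant f \<longleftrightarrow> (\<forall>G H K M N. group G \<and> finite (carrier G) \<and>
     chief_factor G H K \<and> chief_factor G M N \<and> G_isomorphic G H K M N \<longrightarrow> f G H K = f G M N)"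

definition quot_img :: "'a monoid \<Rightarrow> 'a set \<Rightarrow> 'a set \<Rightarrow> 'a set set" where
  "quot_img G H N = (\<lambda>h. r_coset G N h) ` H"

definition cff_quot_compat :: "('a monoid \<Rightarrow> 'a set \<Rightarrow> 'a set \<Rightarrow> bool)
     \<Rightarrow> ('a set monoid \<Rightarrow> 'a set set \<Rightarrow> 'a set set \<Rightarrow> bool) \<Rightarrow> bool" where
  "cff_quot_compat f0 f1 \<longleftrightarrow> (\<forall>G H K N. group G \<and> finite (carrier G) \<and>
     chief_factor G H K \<and> N \<lhd> G \<and> N \<subseteq> K \<longrightarrow>
       f1 (FactGroup G N) (quot_img G H N) (quot_img G K N) = f0 G H K)"

text \<open>A chief factor function, restricted to the groups on type 'a and on type 'a set
  (True stands for the value 1, False for 0).\<close>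
definition chief_factor_function :: "('a monoid \<Rightarrow> 'a set \<Rightarrow> 'a set \<Rightarrow> bool)
     \<Rightarrow> ('a set monoid \<Rightarrow> 'a set set \<Rightarrow> 'a set set \<Rightarrow> bool) \<Rightarrow> bool" where
  "chief_factor_function f0 f1 \<longleftrightarrow> cff_iso_invariant f0 \<and> cff_iso_invariant f1 \<and>
     cff_quot_compat f0 f1"

definition ZF :: "'b monoid \<Rightarrow> ('b monoid \<Rightarrow> 'b set \<Rightarrow> 'b set \<Rightarrow> bool) \<Rightarrow> 'b set" where
  "ZF G f = (GREATEST Z. Z \<lhd> G \<and>
     (\<forall>A B. chief_factor G A B \<and> A \<subseteq> Z \<longrightarrow> f G A B))"

definition centralizer :: "'b monoid \<Rightarrow> 'b set \<Rightarrow> 'b set" where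
  "centralizer Y S = {x \<in> carrier Y. \<forall>s \<in> S. monoid.mult Y x s = monoid.mult Y s x}"

definition sol_res :: "'b monoid \<Rightarrow> 'b set" where
  "sol_res Y = (LEAST N. N \<lhd> Y \<and> solvable (FactGroup Y N))"

end

theory Submission
  imports Defs
begin
lemma set_mult_memI: "x \<in> U \<Longrightarrow> y \<in> V \<Longrightarrow> x \<otimes>\<^bsub>G\<^esub> y \<in> U <#>\<^bsub>G\<^esub> V"
  unfolding set_mult_def by auto

lemma set_mult_memE:
  "w \<in> U <#>\<^bsub>G\<^esub> V \<Longrightarrow> (\<And>x y. x \<in> U \<Longrightarrow> y \<in> V \<Longrightarrow> w = x \<otimes>\<^bsub>G\<^esub> y \<Longrightarrow> P) \<Longrightarrow> P"
  unfolding set_mult_def by auto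

context group
begin

lemma inv_mult_cancel_left: "x \<in> carrier G \<Longrightarrow> y \<in> carrier G \<Longrightarrow> inv x \<otimes> (x \<otimes> y) = y"
  by (simp add: m_assoc [symmetric])

lemma mult_inv_cancel_left: "x \<in> carrier G \<Longrightarrow> y \<in> carrier G \<Longrightarrow> x \<otimes> (inv x \<otimes> y) = y"
  by (simp add: m_assoc [symmetric])

lemma commutator_eq_one_if_commute:
  assumes "x \<in> carrier G" "y \<in> carrier G" "x \<otimes> y = y \<otimes> x"
  shows "x \<otimes> y \<otimes> inv x \<otimes> inv y = \<one>"
  using assms by (simp add: m_assoc mult_inv_cancel_left)

lemma set_mult_subset_subgroup:
  assumes "subgroup S G" "U \<subseteq> S" "V \<subseteq> S"
  shows "U <#> V \<subseteq> S"
proof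
  fix w assume "w \<in> U <#> V"
  then obtain x y where "x \<in> U" "y \<in> V" "w = x \<otimes> y" by (rule set_mult_memE)
  thus "w \<in> S" using assms subgroup.m_closed[OF assms(1)] by auto
qed

lemma set_mult_subgroup_left:
  assumes "subgroup V G" "U \<subseteq> carrier G"
  shows "U \<subseteq> U <#> V"
proof
  fix u assume "u \<in> U"
  hence "u \<otimes> \<one> \<in> U <#> V" using set_mult_memI[where G=G] subgroup.one_closed[OF assms(1)] by blast
  thus "u \<in> U <#> V" using \<open>u \<in> U\<close> assms(2) by auto
qed

lemma set_mult_subgroup_right:
  assumes "subgroup U G" "V \<subseteq> carrier G"
  shows "V \<subseteq> U <#> V"
proof
  fix v assume "v \<in> V"
  hence "\<one> \<otimes> v \<in> U <#> V" using set_mult_memI[where G=G] subgroup.one_closed[OF assms(1)] by blast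
  thus "v \<in> U <#> V" using \<open>v \<in> V\<close> assms(2) by auto
qed

lemma set_mult_absorb_left:
  assumes "subgroup S G" "U \<subseteq> S" "\<one> \<in> U"
  shows "U <#> S = S"
proof
  show "U <#> S \<subseteq> S" using set_mult_subset_subgroup[OF assms(1,2)] by simp
  show "S \<subseteq> U <#> S"
  proof
    fix s assume "s \<in> S"
    hence "\<one> \<otimes> s \<in> U <#> S" using set_mult_memI[where G=G] assms(3) by blast
    thus "s \<in> U <#> S" using \<open>s \<in> S\<close> subgroup.mem_carrier[OF assms(1)] by simp
  qed
qed

lemma set_mult_absorb_right:
  assumes "subgroup S G" "U \<subseteq> S" "\<one> \<in> U"
  shows "S <#> U = S"
proof
  show "S <#> U \<subseteq> S" using set_mult_subset_subgroup[OF assms(1) _ assms(2)] by simp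
  show "S \<subseteq> S <#> U"
  proof
    fix s assume "s \<in> S"
    hence "s \<otimes> \<one> \<in> S <#> U" using set_mult_memI[where G=G] assms(3) by blast
    thus "s \<in> S <#> U" using \<open>s \<in> S\<close> subgroup.mem_carrier[OF assms(1)] by simp
  qed
qed

lemma modular_law_left:
  assumes U: "subgroup U G" and V: "subgroup V G" and W: "subgroup W G" and UW: "U \<subseteq> W"
  shows "(U <#> V) \<inter> W = U <#> (V \<inter> W)"
proof
  show "(U <#> V) \<inter> W \<subseteq> U <#> (V \<inter> W)"
  proof
    fix w assume w: "w \<in> (U <#> V) \<inter> W"
    then obtain x y where xy: "x \<in> U" "y \<in> V" "w = x \<otimes> y" by (auto elim: set_mult_memE)
    have xc: "x \<in> carrier G" and yc: "y \<in> carrier G"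
      using xy subgroup.mem_carrier[OF U] subgroup.mem_carrier[OF V] by auto
    have "y = inv x \<otimes> w" using inv_solve_left[OF yc xc] xy(3) xc yc by simp
    moreover have "inv x \<otimes> w \<in> W"
      using w xy(1) UW subgroup.m_closed[OF W] subgroup.m_inv_closed[OF W] by blast
    ultimately show "w \<in> U <#> (V \<inter> W)" using xy set_mult_memI[where G=G, of x U y "V \<inter> W"] by simp
  qed
  show "U <#> (V \<inter> W) \<subseteq> (U <#> V) \<inter> W"
  proof
    fix w assume "w \<in> U <#> (V \<inter> W)"
    then obtain x y where xy: "x \<in> U" "y \<in> V \<inter> W" "w = x \<otimes> y" by (rule set_mult_memE)
    have "w \<in> W" using xy UW subgroup.m_closed[OF W] by auto
    thus "w \<in> (U <#> V) \<inter> W" using xy set_mult_memI[where G=G, of x U y V] by simp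
  qed
qed

lemma modular_law_right:
  assumes U: "subgroup U G" and V: "subgroup V G" and W: "subgroup W G" and VW: "V \<subseteq> W"
  shows "(U <#> V) \<inter> W = (U \<inter> W) <#> V"
proof
  show "(U <#> V) \<inter> W \<subseteq> (U \<inter> W) <#> V"
  proof
    fix w assume w: "w \<in> (U <#> V) \<inter> W"
    then obtain x y where xy: "x \<in> U" "y \<in> V" "w = x \<otimes> y" by (auto elim: set_mult_memE)
    have xc: "x \<in> carrier G" and yc: "y \<in> carrier G"
      using xy subgroup.mem_carrier[OF U] subgroup.mem_carrier[OF V] by auto
    have "x = w \<otimes> inv y" using inv_solve_right[OF xc _ yc] xy(3) xc yc by simp
    moreover have "w \<otimes> inv y \<in> W"
      using w xy(2) VW subgroup.m_closed[OF W] subgroup.m_inv_closed[OF W] by blast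
    ultimately show "w \<in> (U \<inter> W) <#> V" using xy set_mult_memI[where G=G, of x "U \<inter> W" y V] by simp
  qed
  show "(U \<inter> W) <#> V \<subseteq> (U <#> V) \<inter> W"
  proof
    fix w assume "w \<in> (U \<inter> W) <#> V"
    then obtain x y where xy: "x \<in> U \<inter> W" "y \<in> V" "w = x \<otimes> y" by (rule set_mult_memE)
    have "w \<in> W" using xy VW subgroup.m_closed[OF W] by auto
    thus "w \<in> (U <#> V) \<inter> W" using xy set_mult_memI[where G=G, of x U y V] by simp
  qed
qed

lemma rcos_eq_iff:
  assumes "subgroup B G" "x \<in> carrier G" "y \<in> carrier G"
  shows "B #> x = B #> y \<longleftrightarrow> x \<otimes> inv y \<in> B"
  by (metis assms is_group rcos_self repr_independence subgroup.rcos_module)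

lemma rcos_eq_self_iff:
  assumes "subgroup N G" "x \<in> carrier G"
  shows "N #> x = N \<longleftrightarrow> x \<in> N"
  using assms coset_join1 coset_join2 by blast

lemma rcos_commute_iff:
  assumes N: "N \<lhd> G" and a: "a \<in> carrier G" and b: "b \<in> carrier G"
  shows "(N #> a) <#> (N #> b) = (N #> b) <#> (N #> a) \<longleftrightarrow> a \<otimes> b \<otimes> inv a \<otimes> inv b \<in> N"
proof -
  have "(N #> a) <#> (N #> b) = (N #> b) <#> (N #> a) \<longleftrightarrow> N #> (a \<otimes> b) = N #> (b \<otimes> a)"
    using normal.rcos_sum[OF N] a b by simp
  also have "\<dots> \<longleftrightarrow> a \<otimes> b \<otimes> inv (b \<otimes> a) \<in> N"
    using rcos_eq_iff[OF normal_imp_subgroup[OF N]] a b by simp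
  also have "a \<otimes> b \<otimes> inv (b \<otimes> a) = a \<otimes> b \<otimes> inv a \<otimes> inv b"
    using a b by (simp add: inv_mult_group m_assoc)
  finally show ?thesis .
qed

end

lemma chief_factorD:
  assumes "chief_factor G A B"
  shows "A \<lhd> G" "B \<lhd> G" "B \<subseteq> A" "B \<noteq> A"
  using assms unfolding chief_factor_def by auto

lemma chief_factor_maximal:
  "chief_factor G A B \<Longrightarrow> N \<lhd> G \<Longrightarrow> B \<subseteq> N \<Longrightarrow> N \<subseteq> A \<Longrightarrow> N = B \<or> N = A"
  unfolding chief_factor_def by blast

lemma quot_imgE: "U \<in> quot_img G A B \<Longrightarrow> (\<And>a. a \<in> A \<Longrightarrow> U = B #>\<^bsub>G\<^esub> a \<Longrightarrow> P) \<Longrightarrow> P"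
  unfolding quot_img_def by blast

lemma card_sect_eq_if_G_isomorphic:
  "G_isomorphic G A B A' B' \<Longrightarrow> card (carrier (sect G A B)) = card (carrier (sect G A' B'))"
  unfolding G_isomorphic_def iso_def using bij_betw_same_card by blast

text \<open>The constants of Defs are typed for records without extension, \<open>'a monoid\<close>.\<close>

locale plain_group = group G for G :: "'a monoid" (structure)

context plain_group
begin

lemma group_hom_rcos: "N \<lhd> G \<Longrightarrow> group_hom G (G Mod N) (\<lambda>a. N #> a)"
  by (simp add: group_hom_def group_hom_axioms_def is_group normal.factorgroup_is_group
      normal.r_coset_hom_Mod)

lemma quot_img_mem_iff:
  assumes K: "K \<lhd> G" and Y: "subgroup Y G" and KY: "K \<subseteq> Y" and x: "x \<in> carrier G"
  shows "K #> x \<in> quot_img G Y K \<longleftrightarrow> x \<in> Y"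
proof
  assume "K #> x \<in> quot_img G Y K"
  then obtain y where y: "y \<in> Y" "K #> x = K #> y" unfolding quot_img_def by auto
  have yc: "y \<in> carrier G" using subgroup.mem_carrier[OF Y y(1)] .
  have "x \<otimes> inv y \<in> Y" using rcos_eq_iff[OF normal_imp_subgroup[OF K] x yc] y(2) KY by blast
  hence "x \<otimes> inv y \<otimes> y \<in> Y" using subgroup.m_closed[OF Y _ y(1)] by blast
  thus "x \<in> Y" using x yc by (simp add: m_assoc)
qed (auto simp: quot_img_def)

lemma Union_quot_img:
  assumes K: "K \<lhd> G" and S: "subgroup S G" and KS: "K \<subseteq> S"
  shows "\<Union> (quot_img G S K) = S"
proof
  show "\<Union> (quot_img G S K) \<subseteq> S"
  proof
    fix z assume "z \<in> \<Union> (quot_img G S K)"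
    then obtain x k where "x \<in> S" "k \<in> K" "z = k \<otimes> x"
      unfolding quot_img_def r_coset_def by auto
    thus "z \<in> S" using KS subgroup.m_closed[OF S] by blast
  qed
  show "S \<subseteq> \<Union> (quot_img G S K)"
    using rcos_self[OF _ normal_imp_subgroup[OF K]] subgroup.mem_carrier[OF S]
    unfolding quot_img_def by blast
qed

lemma quot_img_Union:
  assumes "K \<lhd> G" "subgroup \<A> (G Mod K)"
  shows "quot_img G (\<Union>\<A>) K = \<A>"
proof -
  have "\<A> = rcosets\<^bsub>G\<lparr>carrier := \<Union>\<A>\<rparr>\<^esub> K"
    by (rule normal.factgroup_subgroup_union_factor[OF assms])
  also have "\<dots> = quot_img G (\<Union>\<A>) K" unfolding RCOSETS_def quot_img_def by auto
  finally show ?thesis by simp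
qed

lemma quot_img_Int:
  assumes K: "K \<lhd> G" and S: "subgroup S G" and Y: "subgroup Y G" and "K \<subseteq> Y"
  shows "quot_img G S K \<inter> quot_img G Y K = quot_img G (S \<inter> Y) K"
proof
  show "quot_img G S K \<inter> quot_img G Y K \<subseteq> quot_img G (S \<inter> Y) K"
  proof
    fix U assume U: "U \<in> quot_img G S K \<inter> quot_img G Y K"
    then obtain x where x: "x \<in> S" "U = K #> x" unfolding quot_img_def by blast
    hence "x \<in> Y"
      using U quot_img_mem_iff[OF K Y \<open>K \<subseteq> Y\<close> subgroup.mem_carrier[OF S x(1)]] by blast
    thus "U \<in> quot_img G (S \<inter> Y) K" using x unfolding quot_img_def by blast
  qed
qed (auto simp: quot_img_def)

lemma quot_img_normal: "K \<lhd> G \<Longrightarrow> S \<lhd> G \<Longrightarrow> quot_img G S K \<lhd> G Mod K"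
  unfolding quot_img_def
  by (rule normal.surj_hom_normal_subgroup[OF _ group_hom_rcos]) (simp_all add: carrier_FactGroup)

lemma chief_factor_quot_img:
  assumes K: "K \<lhd> G" and ch: "chief_factor G A B" and KB: "K \<subseteq> B"
  shows "chief_factor (G Mod K) (quot_img G A K) (quot_img G B K)"
proof -
  note AB = chief_factorD[OF ch]
  have uA: "\<Union> (quot_img G A K) = A"
    using Union_quot_img[OF K normal_imp_subgroup[OF AB(1)]] AB(3) KB by blast
  have uB: "\<Union> (quot_img G B K) = B"
    using Union_quot_img[OF K normal_imp_subgroup[OF AB(2)] KB] .
  have max: "\<N> = quot_img G B K \<or> \<N> = quot_img G A K"
    if N: "\<N> \<lhd> G Mod K" "quot_img G B K \<subseteq> \<N>" "\<N> \<subseteq> quot_img G A K" for \<N>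
  proof -
    have "B \<subseteq> \<Union>\<N>" "\<Union>\<N> \<subseteq> A" using Union_mono[OF N(2)] Union_mono[OF N(3)] uA uB by auto
    hence "\<Union>\<N> = B \<or> \<Union>\<N> = A"
      using chief_factor_maximal[OF ch normal.factgroup_subgroup_union_normal[OF K N(1)]] by simp
    thus ?thesis using quot_img_Union[OF K normal_imp_subgroup[OF N(1)]] by auto
  qed
  have "quot_img G B K \<noteq> quot_img G A K" using AB(4) uA uB by metis
  moreover have "quot_img G B K \<subseteq> quot_img G A K" using AB(3) unfolding quot_img_def by blast
  ultimately show ?thesis
    unfolding chief_factor_def using quot_img_normal[OF K AB(1)] quot_img_normal[OF K AB(2)] max
    by blast
qed

lemma sect_carrier: "carrier (sect G A B) = quot_img G A B"
  unfolding sect_def FactGroup_def RCOSETS_def quot_img_def by auto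

lemma sect_mult: "monoid.mult (sect G A B) = set_mult G"
  unfolding sect_def FactGroup_def by (auto simp: fun_eq_iff)

lemma sect_eq: "sect G A B = (G Mod B)\<lparr>carrier := quot_img G A B\<rparr>"
proof -
  have "rcosets\<^bsub>G\<lparr>carrier := A\<rparr>\<^esub> B = quot_img G A B"
    unfolding RCOSETS_def quot_img_def by auto
  moreover have "set_mult (G\<lparr>carrier := A\<rparr>) = set_mult G" by (intro ext) (rule set_mult_consistent)
  ultimately show ?thesis unfolding sect_def FactGroup_def by simp
qed

lemma card_sect_ge_two:
  assumes fin: "finite (carrier G)" and ch: "chief_factor G H T"
  shows "2 \<le> card (carrier (sect G H T))"
proof -
  note HT = chief_factorD[OF ch]
  have sH: "subgroup H G" and sT: "subgroup T G" using HT(1,2) normal_imp_subgroup by auto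
  obtain h where h: "h \<in> H" "h \<notin> T" using HT(3,4) by blast
  have hc: "h \<in> carrier G" using h(1) subgroup.mem_carrier[OF sH] by blast
  have "T #> h \<noteq> T" using rcos_eq_self_iff[OF sT hc] h(2) by simp
  moreover have "T #> \<one> = T" using subgroup.subset[OF sT] by simp
  ultimately have "card {T #> \<one>, T #> h} = 2" by simp
  moreover have "{T #> \<one>, T #> h} \<subseteq> carrier (sect G H T)"
    using h(1) subgroup.one_closed[OF sH] unfolding sect_carrier quot_img_def by blast
  moreover have "finite (carrier (sect G H T))"
    unfolding sect_carrier quot_img_def using finite_subset[OF subgroup.subset[OF sH] fin] by blast
  ultimately show ?thesis using card_mono by metis
qed

lemma card_quot_img_mult_card:
  assumes fin: "finite (carrier G)" and C: "subgroup C G" and S: "subgroup S G" and SC: "S \<subseteq> C"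
  shows "card (quot_img G C S) * card S = card C"
proof -
  have "card (rcosets\<^bsub>G\<lparr>carrier := C\<rparr>\<^esub> S) * card S = order (G\<lparr>carrier := C\<rparr>)"
    by (rule group.lagrange[OF subgroup_imp_group[OF C] subgroup_incl[OF S C SC]])
  moreover have "rcosets\<^bsub>G\<lparr>carrier := C\<rparr>\<^esub> S = quot_img G C S"
    unfolding RCOSETS_def quot_img_def by auto
  ultimately show ?thesis unfolding order_def by simp
qed

lemma cconj_rcos:
  assumes B: "B \<lhd> G" and g: "g \<in> carrier G" and x: "x \<in> carrier G"
  shows "cconj G g (B #> x) = B #> (inv g \<otimes> x \<otimes> g)"
proof
  interpret B: normal B G by (rule B)
  show "cconj G g (B #> x) \<subseteq> B #> (inv g \<otimes> x \<otimes> g)"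
  proof
    fix z assume "z \<in> cconj G g (B #> x)"
    then obtain b where b: "b \<in> B" "z = inv g \<otimes> (b \<otimes> x) \<otimes> g"
      unfolding cconj_def r_coset_def by auto
    have "g \<otimes> (inv g \<otimes> (x \<otimes> g)) = x \<otimes> g" using g x by (simp add: m_assoc [symmetric])
    hence "z = (inv g \<otimes> b \<otimes> g) \<otimes> (inv g \<otimes> x \<otimes> g)"
      using g x B.subset b by (simp add: m_assoc)
    thus "z \<in> B #> (inv g \<otimes> x \<otimes> g)"
      using B.inv_op_closed1[OF g b(1)] unfolding r_coset_def by blast
  qed
  show "B #> (inv g \<otimes> x \<otimes> g) \<subseteq> cconj G g (B #> x)"
  proof
    fix z assume "z \<in> B #> (inv g \<otimes> x \<otimes> g)"
    then obtain b where b: "b \<in> B" "z = b \<otimes> (inv g \<otimes> x \<otimes> g)" unfolding r_coset_def by auto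
    have "inv g \<otimes> (g \<otimes> (b \<otimes> (inv g \<otimes> (x \<otimes> g)))) = b \<otimes> (inv g \<otimes> (x \<otimes> g))"
      using g x B.subset b by (simp add: m_assoc [symmetric])
    hence "z = inv g \<otimes> ((g \<otimes> b \<otimes> inv g) \<otimes> x) \<otimes> g"
      using g x B.subset b by (simp add: m_assoc)
    moreover have "(g \<otimes> b \<otimes> inv g) \<otimes> x \<in> B #> x"
      using B.inv_op_closed2[OF g b(1)] unfolding r_coset_def by blast
    ultimately show "z \<in> cconj G g (B #> x)" unfolding cconj_def by blast
  qed
qed

end

text \<open>Two normal subgroups \<open>A\<close> and \<open>B'\<close> with \<open>A \<inter> B' = B\<close> give perspective sections
  \<open>A/B\<close> and \<open>AB'/B'\<close>; the second isomorphism theorem, compatible with the action of \<open>G\<close>.\<close>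

locale perspective = plain_group +
  fixes A B B' :: "'a set"
  assumes A: "A \<lhd> G" and B: "B \<lhd> G" and B': "B' \<lhd> G"
    and BA: "B \<subseteq> A" and Int_eq: "A \<inter> B' = B"
begin

lemma BB': "B \<subseteq> B'"
  using Int_eq by blast

lemma set_mult_rcos:
  assumes "x \<in> carrier G"
  shows "B' <#> (B #> x) = B' #> x"
proof -
  have sB: "subgroup B G" and sB': "subgroup B' G" using B B' normal_imp_subgroup by auto
  have "B' <#> (B #> x) = (B' <#> B) #> x"
    by (rule setmult_rcos_assoc[OF subgroup.subset[OF sB'] subgroup.subset[OF sB] assms])
  also have "B' <#> B = B'" by (rule set_mult_absorb_right[OF sB' BB' subgroup.one_closed[OF sB]])
  finally show ?thesis .
qed

lemma rcos_in_quot_img: "a \<in> A \<Longrightarrow> B' #> a \<in> quot_img G (A <#> B') B'"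
  using set_mult_subgroup_left[OF normal_imp_subgroup[OF B'] normal_imp_subgroup[OF A, THEN subgroup.subset]]
  unfolding quot_img_def by blast

lemma iso: "(\<lambda>U. B' <#> U) \<in> iso (sect G A B) (sect G (A <#> B') B')"
proof -
  have sA: "subgroup A G" and sB: "subgroup B G" and sB': "subgroup B' G"
    using A B B' normal_imp_subgroup by auto
  have Ac: "a \<in> A \<Longrightarrow> a \<in> carrier G" for a using subgroup.mem_carrier[OF sA] .
  have hom: "(\<lambda>U. B' <#> U) \<in> hom (sect G A B) (sect G (A <#> B') B')"
  proof (rule homI)
    fix U assume "U \<in> carrier (sect G A B)"
    then obtain a where "a \<in> A" "U = B #> a" unfolding sect_carrier by (rule quot_imgE)
    thus "B' <#> U \<in> carrier (sect G (A <#> B') B')"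
      using rcos_in_quot_img set_mult_rcos[OF Ac] unfolding sect_carrier by simp
  next
    fix U V assume U: "U \<in> carrier (sect G A B)" and V: "V \<in> carrier (sect G A B)"
    obtain a where a: "a \<in> A" "U = B #> a" using U unfolding sect_carrier by (rule quot_imgE)
    obtain b where b: "b \<in> A" "V = B #> b" using V unfolding sect_carrier by (rule quot_imgE)
    show "B' <#> (U \<otimes>\<^bsub>sect G A B\<^esub> V) = (B' <#> U) \<otimes>\<^bsub>sect G (A <#> B') B'\<^esub> (B' <#> V)"
      unfolding sect_mult a(2) b(2) using Ac[OF a(1)] Ac[OF b(1)]
      by (simp add: normal.rcos_sum[OF B] normal.rcos_sum[OF B'] set_mult_rcos)
  qed
  moreover have "inj_on (\<lambda>U. B' <#> U) (carrier (sect G A B))"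
  proof (rule inj_onI)
    fix U V assume "U \<in> carrier (sect G A B)" "V \<in> carrier (sect G A B)" "B' <#> U = B' <#> V"
    then obtain a b where ab: "a \<in> A" "b \<in> A" "B' <#> (B #> a) = B' <#> (B #> b)"
      and UV: "U = B #> a" "V = B #> b"
      unfolding sect_carrier by (metis quot_imgE)
    have "a \<otimes> inv b \<in> B'" using ab rcos_eq_iff[OF sB' Ac Ac] set_mult_rcos Ac by simp
    moreover have "a \<otimes> inv b \<in> A" using ab subgroup.m_closed[OF sA] subgroup.m_inv_closed[OF sA] by blast
    ultimately show "U = V" using rcos_eq_iff[OF sB Ac Ac] ab UV Int_eq by blast
  qed
  moreover have "carrier (sect G (A <#> B') B') \<subseteq> (\<lambda>U. B' <#> U) ` carrier (sect G A B)"
  proof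
    fix W assume "W \<in> carrier (sect G (A <#> B') B')"
    then obtain c where c: "c \<in> A <#> B'" "W = B' #> c" unfolding sect_carrier by (rule quot_imgE)
    obtain b a where ba: "b \<in> B'" "a \<in> A" "c = b \<otimes> a"
      using c(1) unfolding commut_normal[OF sA B'] by (rule set_mult_memE)
    have "c \<in> B' #> a"
      unfolding ba(3) by (rule rcosI[OF ba(1) subgroup.subset[OF sB'] Ac[OF ba(2)]])
    hence "B' #> a = B' #> c" using repr_independence[OF _ Ac[OF ba(2)] sB'] by simp
    hence "W = B' <#> (B #> a)" using c(2) set_mult_rcos[OF Ac[OF ba(2)]] by simp
    moreover have "B #> a \<in> carrier (sect G A B)" using ba(2) unfolding sect_carrier quot_img_def by (rule imageI)
    ultimately show "W \<in> (\<lambda>U. B' <#> U) ` carrier (sect G A B)" by (rule image_eqI)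
  qed
  moreover have "(\<lambda>U. B' <#> U) ` carrier (sect G A B) \<subseteq> carrier (sect G (A <#> B') B')"
    using hom_carrier[OF hom] .
  ultimately show ?thesis unfolding iso_def bij_betw_def by auto
qed

lemma set_mult_cconj:
  assumes g: "g \<in> carrier G" and U: "U \<in> carrier (sect G A B)"
  shows "B' <#> cconj G g U = cconj G g (B' <#> U)"
proof -
  obtain a where a: "a \<in> A" "U = B #> a" using U unfolding sect_carrier by (rule quot_imgE)
  have ac: "a \<in> carrier G" using subgroup.mem_carrier[OF normal_imp_subgroup[OF A] a(1)] .
  have "B' <#> cconj G g (B #> a) = B' #> (inv g \<otimes> a \<otimes> g)"
    using cconj_rcos[OF B g ac] set_mult_rcos[of "inv g \<otimes> a \<otimes> g"] g ac by simp
  also have "\<dots> = cconj G g (B' <#> (B #> a))"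
    using cconj_rcos[OF B' g ac] set_mult_rcos[OF ac] by simp
  finally show ?thesis using a(2) by simp
qed

lemma G_isomorphic: "G_isomorphic G A B (A <#> B') B'"
  unfolding G_isomorphic_def by (intro exI[of _ "\<lambda>U. B' <#> U"] conjI ballI iso set_mult_cconj)

lemma chief_factor_iff: "chief_factor G A B \<longleftrightarrow> chief_factor G (A <#> B') B'"
proof -
  have sA: "subgroup A G" and sB: "subgroup B G" and sB': "subgroup B' G"
    using A B B' normal_imp_subgroup by auto
  have AA': "A \<subseteq> A <#> B'" by (rule set_mult_subgroup_left[OF sB' subgroup.subset[OF sA]])
  have B'A': "B' \<subseteq> A <#> B'" by (rule set_mult_subgroup_right[OF sA subgroup.subset[OF sB']])
  have BB'_eq: "B <#> B' = B'" by (rule set_mult_absorb_left[OF sB' BB' subgroup.one_closed[OF sB]])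
  show ?thesis
  proof
    assume ch: "chief_factor G A B"
    have "N = B' \<or> N = A <#> B'" if N: "N \<lhd> G" "B' \<subseteq> N" "N \<subseteq> A <#> B'" for N
    proof -
      have "A \<inter> N = B \<or> A \<inter> N = A"
        using chief_factor_maximal[OF ch normal_subgroup_intersect[OF A N(1)]] BA BB' N(2) by blast
      moreover have "N = (A \<inter> N) <#> B'"
        using modular_law_right[OF sA sB' normal_imp_subgroup[OF N(1)] N(2)] N(3) by blast
      ultimately show ?thesis using BB'_eq by auto
    qed
    moreover have "B' \<noteq> A <#> B'" using AA' Int_eq chief_factorD(3,4)[OF ch] by blast
    ultimately show "chief_factor G (A <#> B') B'"
      unfolding chief_factor_def using normal_subgroup_set_mult_closed[OF A B'] B' B'A' by blast
  next
    assume ch: "chief_factor G (A <#> B') B'"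
    have "M = B \<or> M = A" if M: "M \<lhd> G" "B \<subseteq> M" "M \<subseteq> A" for M
    proof -
      have sM: "subgroup M G" using normal_imp_subgroup[OF M(1)] .
      have "M <#> B' = B' \<or> M <#> B' = A <#> B'"
        using chief_factor_maximal[OF ch normal_subgroup_set_mult_closed[OF M(1) B']]
          set_mult_subgroup_right[OF sM subgroup.subset[OF sB']] mono_set_mult[OF M(3), of B' B']
        by blast
      moreover have "(M <#> B') \<inter> A = M"
      proof -
        have "(M <#> B') \<inter> A = M <#> (B' \<inter> A)" by (rule modular_law_left[OF sM sB' sA M(3)])
        also have "B' \<inter> A = B" using Int_eq by blast
        finally show ?thesis
          using set_mult_absorb_right[OF sM M(2) subgroup.one_closed[OF sB]] by simp
      qed
      ultimately show ?thesis using Int_eq AA' by auto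
    qed
    moreover have "B \<noteq> A" using chief_factorD(4)[OF ch] BB'_eq by auto
    ultimately show "chief_factor G A B" unfolding chief_factor_def using A B BA by blast
  qed
qed

end

context plain_group
begin

lemma chief_factor_split:
  assumes ch: "chief_factor G A B" and N: "N \<lhd> G"
  shows "(A \<inter> N) <#> B = A \<or> A \<inter> N \<subseteq> B"
proof -
  note AB = chief_factorD[OF ch]
  have nAN: "A \<inter> N \<lhd> G" by (rule normal_subgroup_intersect[OF AB(1) N])
  have "B \<subseteq> (A \<inter> N) <#> B"
    by (rule set_mult_subgroup_right[OF normal_imp_subgroup[OF nAN] subgroup.subset[OF normal_imp_subgroup[OF AB(2)]]])
  moreover have "(A \<inter> N) <#> B \<subseteq> A"
    using set_mult_subset_subgroup[OF normal_imp_subgroup[OF AB(1)]] AB(3) by blast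
  ultimately have "(A \<inter> N) <#> B = B \<or> (A \<inter> N) <#> B = A"
    using chief_factor_maximal[OF ch normal_subgroup_set_mult_closed[OF nAN AB(2)]] by blast
  moreover have "A \<inter> N \<subseteq> (A \<inter> N) <#> B"
    by (rule set_mult_subgroup_left[OF normal_imp_subgroup[OF AB(2)] subgroup.subset[OF normal_imp_subgroup[OF nAN]]])
  ultimately show ?thesis by auto
qed

lemma chief_factor_restrict:
  assumes ch: "chief_factor G A B" and N: "N \<lhd> G" and e: "(A \<inter> N) <#> B = A"
  shows "chief_factor G (A \<inter> N) (B \<inter> N)" "G_isomorphic G (A \<inter> N) (B \<inter> N) A B"
proof -
  note AB = chief_factorD[OF ch]
  have "perspective G (A \<inter> N) (B \<inter> N) B"
    unfolding perspective_def perspective_axioms_def plain_group_def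
    using is_group AB normal_subgroup_intersect[OF AB(1) N] normal_subgroup_intersect[OF AB(2) N] by blast
  then interpret perspective G "A \<inter> N" "B \<inter> N" B .
  show "chief_factor G (A \<inter> N) (B \<inter> N)" using chief_factor_iff ch e by simp
  show "G_isomorphic G (A \<inter> N) (B \<inter> N) A B" using G_isomorphic e by simp
qed

lemma chief_factor_lift:
  assumes ch: "chief_factor G A B" and N: "N \<lhd> G" and i: "A \<inter> N \<subseteq> B"
  shows "chief_factor G (A <#> N) (B <#> N)" "G_isomorphic G A B (A <#> N) (B <#> N)"
proof -
  note AB = chief_factorD[OF ch]
  have sA: "subgroup A G" and sB: "subgroup B G" and sN: "subgroup N G"
    using AB N normal_imp_subgroup by auto
  have "A <#> (B <#> N) = (A <#> B) <#> N"
    using set_mult_assoc subgroup.subset[OF sA] subgroup.subset[OF sB] subgroup.subset[OF sN] by simp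
  also have "A <#> B = A" by (rule set_mult_absorb_right[OF sA AB(3) subgroup.one_closed[OF sB]])
  finally have e1: "A <#> (B <#> N) = A <#> N" .
  have "(B <#> N) \<inter> A = B <#> (N \<inter> A)" by (rule modular_law_left[OF sB sN sA AB(3)])
  also have "\<dots> = B"
    using i subgroup.one_closed[OF sN] subgroup.one_closed[OF sA]
    by (intro set_mult_absorb_right[OF sB]) auto
  finally have e2: "A \<inter> (B <#> N) = B" by blast
  have "perspective G A B (B <#> N)"
    unfolding perspective_def perspective_axioms_def plain_group_def
    using is_group AB e2 normal_subgroup_set_mult_closed[OF AB(2) N] by blast
  then interpret perspective G A B "B <#> N" .
  show "chief_factor G (A <#> N) (B <#> N)" using chief_factor_iff ch e1 by simp
  show "G_isomorphic G A B (A <#> N) (B <#> N)" using G_isomorphic e1 by simp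
qed

lemma chief_factor_Int_normal:
  assumes ch: "chief_factor G H T" and N: "N \<lhd> G" and HN: "\<not> H \<inter> N \<subseteq> T"
  shows "chief_factor G (H \<inter> N) (T \<inter> N)" "G_isomorphic G (H \<inter> N) (T \<inter> N) H T"
    "H = (H \<inter> N) <#> T"
  using chief_factor_split[OF ch N] HN chief_factor_restrict[OF ch N] by auto

end

definition f_hypercentral :: "'b monoid \<Rightarrow> ('b monoid \<Rightarrow> 'b set \<Rightarrow> 'b set \<Rightarrow> bool) \<Rightarrow> 'b set \<Rightarrow> bool"
  where "f_hypercentral G f N \<longleftrightarrow> N \<lhd> G \<and> (\<forall>A B. chief_factor G A B \<and> A \<subseteq> N \<longrightarrow> f G A B)"

definition chief_iso_invariant :: "'b monoid \<Rightarrow> ('b monoid \<Rightarrow> 'b set \<Rightarrow> 'b set \<Rightarrow> bool) \<Rightarrow> bool"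
  where "chief_iso_invariant G f \<longleftrightarrow> (\<forall>H K M N.
    chief_factor G H K \<and> chief_factor G M N \<and> G_isomorphic G H K M N \<longrightarrow> f G H K = f G M N)"

lemma chief_iso_invariantD:
  "chief_iso_invariant G f \<Longrightarrow> chief_factor G H K \<Longrightarrow> chief_factor G M N \<Longrightarrow>
    G_isomorphic G H K M N \<Longrightarrow> f G H K = f G M N"
  unfolding chief_iso_invariant_def by blast

lemma f_hypercentral_subset:
  "f_hypercentral G f M \<Longrightarrow> N \<lhd> G \<Longrightarrow> N \<subseteq> M \<Longrightarrow> f_hypercentral G f N"
  unfolding f_hypercentral_def by blast

context plain_group
begin

lemma f_hypercentral_trivial: "f_hypercentral G f {\<one>}"
proof -
  have "\<not> chief_factor G A B" if "A \<subseteq> {\<one>}" for A B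
    using that chief_factorD[of G A B] subgroup.one_closed[OF normal_imp_subgroup] by blast
  thus ?thesis unfolding f_hypercentral_def using one_is_normal by blast
qed

text \<open>A chief factor \<open>A/B\<close> is covered by \<open>N\<close> when \<open>(A \<inter> N)B = A\<close>; it is then
  \<open>G\<close>-isomorphic to the chief factor \<open>(A \<inter> N)/(B \<inter> N)\<close> below \<open>N\<close>.\<close>

lemma f_if_covered:
  assumes f: "chief_iso_invariant G f" and ch: "chief_factor G A B" and N: "f_hypercentral G f N"
    and cover: "(A \<inter> N) <#> B = A"
  shows "f G A B"
proof -
  have nN: "N \<lhd> G" using N unfolding f_hypercentral_def by blast
  note r = chief_factor_restrict[OF ch nN cover]
  have "f G (A \<inter> N) (B \<inter> N)" using N r(1) unfolding f_hypercentral_def by blast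
  thus ?thesis using chief_iso_invariantD[OF f r(1) ch r(2)] by simp
qed

lemma f_hypercentral_set_mult:
  assumes f: "chief_iso_invariant G f" and N1: "f_hypercentral G f N1" and N2: "f_hypercentral G f N2"
  shows "f_hypercentral G f (N1 <#> N2)"
proof -
  have n1: "N1 \<lhd> G" and n2: "N2 \<lhd> G" using N1 N2 unfolding f_hypercentral_def by auto
  have sN1: "subgroup N1 G" and sN2: "subgroup N2 G" using n1 n2 normal_imp_subgroup by auto
  have n12: "N1 <#> N2 \<lhd> G" by (rule normal_subgroup_set_mult_closed[OF n1 n2])
  have "f G A B" if ch: "chief_factor G A B" and AN: "A \<subseteq> N1 <#> N2" for A B
  proof (cases "(A \<inter> N1) <#> B = A")
    case True thus ?thesis using f_if_covered[OF f ch N1] by blast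
  next
    case False
    hence i: "A \<inter> N1 \<subseteq> B" using chief_factor_split[OF ch n1] by blast
    note l = chief_factor_lift[OF ch n1 i]
    note AB = chief_factorD[OF ch]
    have sA1: "subgroup (A <#> N1) G"
      using normal_imp_subgroup[OF normal_subgroup_set_mult_closed[OF AB(1) n1]] .
    have N1A1: "N1 \<subseteq> A <#> N1"
      by (rule set_mult_subgroup_right[OF normal_imp_subgroup[OF AB(1)] subgroup.subset[OF sN1]])
    have A1sub: "A <#> N1 \<subseteq> N1 <#> N2"
      using set_mult_subset_subgroup[OF normal_imp_subgroup[OF n12] AN]
        set_mult_subgroup_left[OF sN2 subgroup.subset[OF sN1]] by blast
    have "A <#> N1 = (N1 <#> N2) \<inter> (A <#> N1)" using A1sub by blast
    also have "\<dots> = N1 <#> (N2 \<inter> (A <#> N1))" by (rule modular_law_left[OF sN1 sN2 sA1 N1A1])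
    also have "N2 \<inter> (A <#> N1) = (A <#> N1) \<inter> N2" by blast
    also have "N1 <#> ((A <#> N1) \<inter> N2) = ((A <#> N1) \<inter> N2) <#> N1"
      using normal_subgroup_intersect[OF normal_subgroup_set_mult_closed[OF AB(1) n1] n2]
      by (intro commut_normal[symmetric] normal_imp_subgroup n1)
    finally have eA1: "A <#> N1 = ((A <#> N1) \<inter> N2) <#> N1" .
    have "((A <#> N1) \<inter> N2) <#> (B <#> N1) = A <#> N1"
    proof
      show "((A <#> N1) \<inter> N2) <#> (B <#> N1) \<subseteq> A <#> N1"
        using set_mult_subset_subgroup[OF sA1] mono_set_mult[OF AB(3), of N1 N1] by blast
      show "A <#> N1 \<subseteq> ((A <#> N1) \<inter> N2) <#> (B <#> N1)"
        using eA1 mono_set_mult[of "(A <#> N1) \<inter> N2" "(A <#> N1) \<inter> N2" N1 "B <#> N1"]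
          set_mult_subgroup_right[OF normal_imp_subgroup[OF AB(2)] subgroup.subset[OF sN1]] by auto
    qed
    hence "f G (A <#> N1) (B <#> N1)" using f_if_covered[OF f l(1) N2] by blast
    thus ?thesis using chief_iso_invariantD[OF f ch l(1) l(2)] by simp
  qed
  thus ?thesis unfolding f_hypercentral_def using n12 by blast
qed

lemma f_hypercentral_extend:
  assumes f: "chief_iso_invariant G f" and N: "f_hypercentral G f N" and ch: "chief_factor G M N"
    and fMN: "f G M N"
  shows "f_hypercentral G f M"
proof -
  have nN: "N \<lhd> G" using N unfolding f_hypercentral_def by blast
  note MN = chief_factorD[OF ch]
  have "f G A B" if chAB: "chief_factor G A B" and AM: "A \<subseteq> M" for A B
  proof (cases "(A \<inter> N) <#> B = A")
    case True thus ?thesis using f_if_covered[OF f chAB N] by blast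
  next
    case False
    hence i: "A \<inter> N \<subseteq> B" using chief_factor_split[OF chAB nN] by blast
    note l = chief_factor_lift[OF chAB nN i]
    note AB = chief_factorD[OF chAB]
    have sN: "subgroup N G" and sM: "subgroup M G" using nN MN(1) normal_imp_subgroup by auto
    have NA1: "N \<subseteq> A <#> N" and NB1: "N \<subseteq> B <#> N"
      using set_mult_subgroup_right[OF normal_imp_subgroup[OF AB(1)] subgroup.subset[OF sN]]
        set_mult_subgroup_right[OF normal_imp_subgroup[OF AB(2)] subgroup.subset[OF sN]] by auto
    have A1M: "A <#> N \<subseteq> M" and B1M: "B <#> N \<subseteq> M"
      using set_mult_subset_subgroup[OF sM] AM AB(3) MN(3) by blast+
    have "B <#> N = N \<or> B <#> N = M" "A <#> N = N \<or> A <#> N = M"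
      using chief_factor_maximal[OF ch normal_subgroup_set_mult_closed[OF AB(2) nN] NB1 B1M]
        chief_factor_maximal[OF ch normal_subgroup_set_mult_closed[OF AB(1) nN] NA1 A1M] by auto
    moreover have "B <#> N \<noteq> A <#> N" "B <#> N \<subseteq> A <#> N" using chief_factorD(3,4)[OF l(1)] by auto
    ultimately have "B <#> N = N" "A <#> N = M" using NB1 by auto
    hence "f G (A <#> N) (B <#> N)" using fMN by simp
    thus ?thesis using chief_iso_invariantD[OF f chAB l(1) l(2)] by simp
  qed
  thus ?thesis unfolding f_hypercentral_def using MN(1) by blast
qed

lemma f_hypercentral_ZF:
  assumes fin: "finite (carrier G)" and f: "chief_iso_invariant G f"
  shows "f_hypercentral G f (ZF G f)" and "f_hypercentral G f N \<Longrightarrow> N \<subseteq> ZF G f"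
proof -
  define \<F> where "\<F> = {N. f_hypercentral G f N}"
  have sub: "N \<subseteq> carrier G" if "N \<in> \<F>" for N
  proof -
    have "N \<lhd> G" using that unfolding \<F>_def f_hypercentral_def by simp
    thus ?thesis by (rule subgroup.subset[OF normal_imp_subgroup])
  qed
  have fin\<F>: "finite \<F>"
    by (rule finite_subset[OF _ finite_Pow_iff[THEN iffD2, OF fin]]) (use sub in auto)
  have "{\<one>} \<in> \<F>" unfolding \<F>_def by (simp add: f_hypercentral_trivial)
  hence "Max (card ` \<F>) \<in> card ` \<F>" using fin\<F> by (intro Max_in) auto
  then obtain Z where Z: "Max (card ` \<F>) = card Z" "Z \<in> \<F>" by (rule imageE)
  have greatest: "M \<subseteq> Z" if M: "M \<in> \<F>" for M
  proof -
    have ZM: "Z <#> M \<in> \<F>" using f_hypercentral_set_mult[OF f] Z(2) M unfolding \<F>_def by simp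
    have sZ: "subgroup Z G" and sM: "subgroup M G"
      using Z(2) M normal_imp_subgroup unfolding \<F>_def f_hypercentral_def by auto
    have le: "Z \<subseteq> Z <#> M" by (rule set_mult_subgroup_left[OF sM subgroup.subset[OF sZ]])
    have finZM: "finite (Z <#> M)" by (rule finite_subset[OF sub[OF ZM] fin])
    have "card (Z <#> M) \<le> card Z"
      using Max_ge[OF finite_imageI[OF fin\<F>] imageI[OF ZM, of card]] Z(1) by simp
    hence "Z = Z <#> M" using card_subset_eq[OF finZM le] card_mono[OF finZM le] by simp
    thus ?thesis using set_mult_subgroup_right[OF sZ subgroup.subset[OF sM]] by simp
  qed
  have "ZF G f = Z"
    unfolding ZF_def
  proof (rule Greatest_equality)
    show "Z \<lhd> G \<and> (\<forall>A B. chief_factor G A B \<and> A \<subseteq> Z \<longrightarrow> f G A B)"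
      using Z(2) unfolding \<F>_def f_hypercentral_def by simp
    show "Y \<le> Z" if "Y \<lhd> G \<and> (\<forall>A B. chief_factor G A B \<and> A \<subseteq> Y \<longrightarrow> f G A B)" for Y
      using that greatest unfolding \<F>_def f_hypercentral_def by simp
  qed
  thus "f_hypercentral G f (ZF G f)" and "f_hypercentral G f N \<Longrightarrow> N \<subseteq> ZF G f"
    using Z(2) greatest unfolding \<F>_def by auto
qed

end

context plain_group
begin

lemma derived_series_antimono:
  "m \<le> n \<Longrightarrow> (derived G ^^ n) (carrier G) \<subseteq> (derived G ^^ m) (carrier G)"
proof (induction n rule: dec_induct)
  case (step k)
  have "derived G ((derived G ^^ k) (carrier G)) \<subseteq> (derived G ^^ k) (carrier G)"
    by (rule derived_incl[OF subset_refl exp_of_derived_is_subgroup[OF subgroup_self]])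
  thus ?case using step.IH by simp
qed simp

lemma derived_series_normal: "(derived G ^^ m) (carrier G) \<lhd> G"
  by (induction m) (simp_all add: normal_self derived_is_normal)

lemma solvable_FactGroup_iff:
  assumes N: "N \<lhd> G"
  shows "solvable (G Mod N) \<longleftrightarrow> (\<exists>m. (derived G ^^ m) (carrier G) \<subseteq> N)"
proof -
  interpret h: group_hom G "G Mod N" "\<lambda>a. N #> a" by (rule group_hom_rcos[OF N])
  have "(derived (G Mod N) ^^ m) (carrier (G Mod N)) = {\<one>\<^bsub>G Mod N\<^esub>} \<longleftrightarrow>
        (derived G ^^ m) (carrier G) \<subseteq> N" for m
  proof -
    let ?D = "(derived G ^^ m) (carrier G)"
    have sD: "subgroup ?D G" by (rule exp_of_derived_is_subgroup[OF subgroup_self])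
    have "(derived (G Mod N) ^^ m) (carrier (G Mod N)) = (\<lambda>a. N #> a) ` ?D"
      using h.exp_of_derived_img[OF subset_refl, of m] by (simp add: carrier_FactGroup)
    moreover have "(\<lambda>a. N #> a) ` ?D = {N} \<longleftrightarrow> ?D \<subseteq> N"
    proof
      assume e: "(\<lambda>a. N #> a) ` ?D = {N}"
      show "?D \<subseteq> N"
      proof
        fix x assume x: "x \<in> ?D"
        hence "N #> x = N" using e by blast
        thus "x \<in> N" using rcos_eq_self_iff[OF normal_imp_subgroup[OF N] subgroup.mem_carrier[OF sD x]] by simp
      qed
    next
      assume "?D \<subseteq> N"
      hence "N #> x = N" if "x \<in> ?D" for x
        using that rcos_eq_self_iff[OF normal_imp_subgroup[OF N] subgroup.mem_carrier[OF sD that]] by blast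
      thus "(\<lambda>a. N #> a) ` ?D = {N}" using subgroup.one_closed[OF sD] by blast
    qed
    ultimately show ?thesis by simp
  qed
  thus ?thesis
    by (simp add: group.solvable_iff_trivial_derived_seq[OF normal.factorgroup_is_group[OF N]])
qed

lemma derived_series_stable:
  assumes fin: "finite (carrier G)"
  obtains n where "\<And>m. (derived G ^^ n) (carrier G) \<subseteq> (derived G ^^ m) (carrier G)"
proof -
  define D where "D m = (derived G ^^ m) (carrier G)" for m
  obtain n where n: "\<And>m. card (D n) \<le> card (D m)"
    using ex_has_least_nat[of "\<lambda>_. True" 0 "\<lambda>m. card (D m)"] by auto
  have finD: "finite (D m)" for m
    unfolding D_def by (rule finite_subset[OF subgroup.subset[OF exp_of_derived_is_subgroup[OF subgroup_self]] fin])
  have "D n \<subseteq> D m" for m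
  proof (cases "m \<le> n")
    case True thus ?thesis unfolding D_def by (rule derived_series_antimono)
  next
    case False
    hence sub: "D m \<subseteq> D n" unfolding D_def by (intro derived_series_antimono) simp
    hence "D m = D n" using card_subset_eq[OF finD sub] card_mono[OF finD sub] n[of m] by simp
    thus ?thesis by simp
  qed
  thus ?thesis using that unfolding D_def by blast
qed

lemma sol_res_eq_derived_series:
  assumes n: "\<And>m. (derived G ^^ n) (carrier G) \<subseteq> (derived G ^^ m) (carrier G)"
  shows "sol_res G = (derived G ^^ n) (carrier G)"
  unfolding sol_res_def
proof (rule Least_equality)
  show "(derived G ^^ n) (carrier G) \<lhd> G \<and> solvable (G Mod (derived G ^^ n) (carrier G))"
    using derived_series_normal solvable_FactGroup_iff[OF derived_series_normal] by blast
  show "(derived G ^^ n) (carrier G) \<le> N" if "N \<lhd> G \<and> solvable (G Mod N)" for N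
    using that solvable_FactGroup_iff n by blast
qed

lemma sol_res_subgroup_derived_series:
  assumes fin: "finite (carrier G)" and S: "subgroup S G"
  shows "\<exists>n. sol_res (G\<lparr>carrier := S\<rparr>) = (derived G ^^ n) S \<and>
    (\<forall>m. (derived G ^^ n) S \<subseteq> (derived G ^^ m) S)"
proof -
  interpret S: plain_group "G\<lparr>carrier := S\<rparr>"
    unfolding plain_group_def by (rule subgroup_imp_group[OF S])
  have eq: "(derived (G\<lparr>carrier := S\<rparr>) ^^ m) S = (derived G ^^ m) S" for m
  proof (induction m)
    case (Suc m)
    have "(derived G ^^ m) S \<subseteq> S"
      using derived_incl[OF _ S] by (induction m) simp_all
    thus ?case using Suc.IH derived_consistent[OF _ S] by simp
  qed simp
  obtain n where n: "\<And>m. (derived (G\<lparr>carrier := S\<rparr>) ^^ n) S \<subseteq> (derived (G\<lparr>carrier := S\<rparr>) ^^ m) S"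
    using S.derived_series_stable finite_subset[OF subgroup.subset[OF S] fin] by auto
  have "sol_res (G\<lparr>carrier := S\<rparr>) = (derived G ^^ n) S"
    using S.sol_res_eq_derived_series[of n] n eq by simp
  moreover have "(derived G ^^ n) S \<subseteq> (derived G ^^ m) S" for m using n[of m] eq by simp
  ultimately show ?thesis by blast
qed

lemma sol_res_subgroup_normal:
  assumes fin: "finite (carrier G)" and S: "S \<lhd> G"
  shows "sol_res (G\<lparr>carrier := S\<rparr>) \<lhd> G"
proof -
  obtain n where "sol_res (G\<lparr>carrier := S\<rparr>) = (derived G ^^ n) S"
    using sol_res_subgroup_derived_series[OF fin normal_imp_subgroup[OF S]] by auto
  moreover have "(derived G ^^ m) S \<lhd> G" for m
    by (induction m) (simp_all add: S derived_is_normal)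
  ultimately show ?thesis by simp
qed

lemma sol_res_subgroup_subset_derived:
  assumes "finite (carrier G)" "subgroup S G"
  shows "sol_res (G\<lparr>carrier := S\<rparr>) \<subseteq> derived G S"
proof -
  obtain n where n: "sol_res (G\<lparr>carrier := S\<rparr>) = (derived G ^^ n) S"
    and stable: "\<And>m. (derived G ^^ n) S \<subseteq> (derived G ^^ m) S"
    using sol_res_subgroup_derived_series[OF assms] by auto
  have "(derived G ^^ n) S \<subseteq> (derived G ^^ 1) S" by (rule stable)
  thus ?thesis using n by simp
qed

lemma sol_res_subgroup_perfect:
  assumes "finite (carrier G)" "subgroup S G"
  shows "sol_res (G\<lparr>carrier := S\<rparr>) \<subseteq> derived G (sol_res (G\<lparr>carrier := S\<rparr>))"
proof -
  obtain n where n: "sol_res (G\<lparr>carrier := S\<rparr>) = (derived G ^^ n) S"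
    and stable: "\<And>m. (derived G ^^ n) S \<subseteq> (derived G ^^ m) S"
    using sol_res_subgroup_derived_series[OF assms] by auto
  have "(derived G ^^ n) S \<subseteq> (derived G ^^ Suc n) S" by (rule stable)
  thus ?thesis using n by simp
qed

lemma perfect_subset_sol_res_subgroup:
  assumes "finite (carrier G)" "subgroup S G" and PS: "P \<subseteq> S" and perfect: "derived G P = P"
  shows "P \<subseteq> sol_res (G\<lparr>carrier := S\<rparr>)"
proof -
  obtain n where n: "sol_res (G\<lparr>carrier := S\<rparr>) = (derived G ^^ n) S"
    using sol_res_subgroup_derived_series[OF assms(1,2)] by auto
  have "(derived G ^^ m) P = P" for m by (induction m) (simp_all add: perfect)
  thus ?thesis using mono_exp_of_derived[OF PS, of n] n by simp
qed

end

lemma commutator_mem_derived: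
  "a \<in> S \<Longrightarrow> b \<in> S \<Longrightarrow> a \<otimes>\<^bsub>G\<^esub> b \<otimes>\<^bsub>G\<^esub> inv\<^bsub>G\<^esub> a \<otimes>\<^bsub>G\<^esub> inv\<^bsub>G\<^esub> b \<in> derived G S"
  unfolding derived_def by (rule generate.incl) blast

context plain_group
begin

lemma centralizer_restrict_normal:
  assumes A: "A \<lhd> G" and S: "S \<lhd> G"
  shows "centralizer (G\<lparr>carrier := A\<rparr>) S \<lhd> G"
proof -
  interpret A: normal A G by (rule A)
  interpret S: normal S G by (rule S)
  have C: "centralizer (G\<lparr>carrier := A\<rparr>) S = {u \<in> A. \<forall>s \<in> S. u \<otimes> s = s \<otimes> u}"
    unfolding centralizer_def by simp
  have sub: "subgroup {u \<in> A. \<forall>s \<in> S. u \<otimes> s = s \<otimes> u} G"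
  proof (rule subgroupI)
    show "{u \<in> A. \<forall>s \<in> S. u \<otimes> s = s \<otimes> u} \<subseteq> carrier G" using A.subset by blast
    have "\<one> \<in> {u \<in> A. \<forall>s \<in> S. u \<otimes> s = s \<otimes> u}" using A.one_closed S.subset by auto
    thus "{u \<in> A. \<forall>s \<in> S. u \<otimes> s = s \<otimes> u} \<noteq> {}" by blast
  next
    fix u assume "u \<in> {u \<in> A. \<forall>s \<in> S. u \<otimes> s = s \<otimes> u}"
    hence u: "u \<in> A" "u \<in> carrier G" "\<And>s. s \<in> S \<Longrightarrow> u \<otimes> s = s \<otimes> u" using A.subset by auto
    have "inv u \<otimes> s = s \<otimes> inv u" if "s \<in> S" for s
    proof -
      have sc: "s \<in> carrier G" using that S.subset by blast
      have "inv u \<otimes> s = inv u \<otimes> (s \<otimes> u) \<otimes> inv u" using u(2) sc by (simp add: m_assoc)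
      also have "\<dots> = inv u \<otimes> (u \<otimes> s) \<otimes> inv u" using u(3)[OF that] by simp
      also have "\<dots> = s \<otimes> inv u" using u(2) sc by (simp add: m_assoc [symmetric])
      finally show ?thesis .
    qed
    thus "inv u \<in> {u \<in> A. \<forall>s \<in> S. u \<otimes> s = s \<otimes> u}" using u(1) by simp
  next
    fix u v assume "u \<in> {u \<in> A. \<forall>s \<in> S. u \<otimes> s = s \<otimes> u}" "v \<in> {u \<in> A. \<forall>s \<in> S. u \<otimes> s = s \<otimes> u}"
    hence u: "u \<in> A" "u \<in> carrier G" "\<And>s. s \<in> S \<Longrightarrow> u \<otimes> s = s \<otimes> u"
      and v: "v \<in> A" "v \<in> carrier G" "\<And>s. s \<in> S \<Longrightarrow> v \<otimes> s = s \<otimes> v" using A.subset by auto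
    have "u \<otimes> v \<otimes> s = s \<otimes> (u \<otimes> v)" if "s \<in> S" for s
    proof -
      have sc: "s \<in> carrier G" using that S.subset by blast
      have "u \<otimes> v \<otimes> s = u \<otimes> (s \<otimes> v)" using u(2) v(2) sc v(3)[OF that] by (simp add: m_assoc)
      also have "\<dots> = (s \<otimes> u) \<otimes> v" using u(2) v(2) sc u(3)[OF that] by (simp add: m_assoc [symmetric])
      finally show ?thesis using u(2) v(2) sc by (simp add: m_assoc)
    qed
    thus "u \<otimes> v \<in> {u \<in> A. \<forall>s \<in> S. u \<otimes> s = s \<otimes> u}" using u(1) v(1) by simp
  qed
  show ?thesis unfolding C normal_inv_iff
  proof (intro conjI ballI sub)
    fix x u assume x: "x \<in> carrier G" and "u \<in> {u \<in> A. \<forall>s \<in> S. u \<otimes> s = s \<otimes> u}"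
    hence u: "u \<in> A" "u \<in> carrier G" "\<And>s. s \<in> S \<Longrightarrow> u \<otimes> s = s \<otimes> u" using A.subset by auto
    have "x \<otimes> u \<otimes> inv x \<otimes> s = s \<otimes> (x \<otimes> u \<otimes> inv x)" if s: "s \<in> S" for s
    proof -
      define s' where "s' = inv x \<otimes> s \<otimes> x"
      have s': "s' \<in> S" "s' \<in> carrier G" unfolding s'_def using S.inv_op_closed1[OF x s] S.subset by auto
      have ss: "s = x \<otimes> s' \<otimes> inv x"
        unfolding s'_def using x S.subset s by (simp add: m_assoc mult_inv_cancel_left)
      have "x \<otimes> u \<otimes> inv x \<otimes> s = x \<otimes> (u \<otimes> s') \<otimes> inv x"
        unfolding ss using x u(2) s'(2) by (simp add: m_assoc inv_mult_cancel_left)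
      also have "\<dots> = x \<otimes> (s' \<otimes> u) \<otimes> inv x" using u(3)[OF s'(1)] by simp
      also have "\<dots> = s \<otimes> (x \<otimes> u \<otimes> inv x)"
        unfolding ss using x u(2) s'(2) by (simp add: m_assoc inv_mult_cancel_left)
      finally show ?thesis .
    qed
    thus "x \<otimes> u \<otimes> inv x \<in> {u \<in> A. \<forall>s \<in> S. u \<otimes> s = s \<otimes> u}" using A.inv_op_closed2[OF x u(1)] by simp
  qed
qed

lemma group_sect: "H \<lhd> G \<Longrightarrow> T \<lhd> G \<Longrightarrow> group (sect G H T)"
  unfolding sect_eq quot_img_def
  by (rule group.subgroup_imp_group[OF normal.factorgroup_is_group])
    (auto intro: group_hom.subgroup_img_is_subgroup[OF group_hom_rcos] normal_imp_subgroup)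

lemma comm_group_sect_if_derived_subset:
  assumes T: "T \<lhd> G" and N: "N \<lhd> G" and H: "H = N <#> T" and NT: "derived G N \<subseteq> T"
  shows "comm_group (sect G H T)"
proof -
  have sN: "subgroup N G" and sT: "subgroup T G" using N T normal_imp_subgroup by auto
  have red: "\<exists>z \<in> N. T #> h = T #> z" if h: "h \<in> H" for h
  proof -
    obtain z t where zt: "z \<in> N" "t \<in> T" "h = z \<otimes> t" using h unfolding H by (rule set_mult_memE)
    have zc: "z \<in> carrier G" and tc: "t \<in> carrier G"
      using subgroup.mem_carrier[OF sN zt(1)] subgroup.mem_carrier[OF sT zt(2)] .
    have "h \<otimes> inv z \<in> T" unfolding zt(3) by (rule normal.inv_op_closed2[OF T zc zt(2)])
    hence "T #> h = T #> z" using rcos_eq_iff[OF sT _ zc] zt(3) zc tc by simp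
    thus ?thesis using zt(1) by blast
  qed
  show ?thesis
  proof (rule group.group_comm_groupI[OF group_sect[OF normal_subgroup_set_mult_closed[OF N T, folded H] T]])
    fix U V assume "U \<in> carrier (sect G H T)" "V \<in> carrier (sect G H T)"
    then obtain h k where hk: "h \<in> H" "U = T #> h" "k \<in> H" "V = T #> k"
      unfolding sect_carrier by (metis quot_imgE)
    obtain z where z: "z \<in> N" "T #> h = T #> z" using red[OF hk(1)] by blast
    obtain z' where z': "z' \<in> N" "T #> k = T #> z'" using red[OF hk(3)] by blast
    have "z \<otimes> z' \<otimes> inv z \<otimes> inv z' \<in> T"
      using commutator_mem_derived[of z N z' G] z(1) z'(1) NT by blast
    hence "(T #> z) <#> (T #> z') = (T #> z') <#> (T #> z)"
      using rcos_commute_iff[OF T subgroup.mem_carrier[OF sN z(1)] subgroup.mem_carrier[OF sN z'(1)]] by simp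
    thus "U \<otimes>\<^bsub>sect G H T\<^esub> V = V \<otimes>\<^bsub>sect G H T\<^esub> U" unfolding sect_mult hk(2,4) z(2) z'(2) .
  qed
qed

lemma chief_factor_derived_cover:
  assumes ch: "chief_factor G M N" and MN: "\<not> derived G M \<subseteq> N"
  shows "derived G M <#> N = M"
proof -
  note MN' = chief_factorD[OF ch]
  have sM: "subgroup M G" and sN: "subgroup N G" using MN'(1,2) normal_imp_subgroup by auto
  have nW: "derived G M \<lhd> G" by (rule derived_is_normal[OF MN'(1)])
  have "derived G M <#> N = N \<or> derived G M <#> N = M"
    using chief_factor_maximal[OF ch normal_subgroup_set_mult_closed[OF nW MN'(2)]]
      set_mult_subgroup_right[OF normal_imp_subgroup[OF nW] subgroup.subset[OF sN]]
      set_mult_subset_subgroup[OF sM derived_incl[OF subset_refl sM] MN'(3)] by blast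
  moreover have "derived G M \<subseteq> derived G M <#> N"
    by (rule set_mult_subgroup_left[OF sN derived_in_carrier[OF subgroup.subset[OF sM]]])
  ultimately show ?thesis using MN by auto
qed

lemma derived_quot_img_cover:
  assumes N: "N \<lhd> G" and M: "subgroup M G" and cover: "derived G M <#> N = M"
  shows "derived (G Mod N) (quot_img G M N) = quot_img G M N"
proof -
  interpret h: group_hom G "G Mod N" "\<lambda>a. N #> a" by (rule group_hom_rcos[OF N])
  have kernel: "kernel G (G Mod N) (\<lambda>a. N #> a) = N"
    unfolding kernel_def using rcos_eq_self_iff[OF normal_imp_subgroup[OF N]]
      subgroup.subset[OF normal_imp_subgroup[OF N]] by auto
  have "derived (G Mod N) (quot_img G M N) = (\<lambda>a. N #> a) ` derived G M"
    unfolding quot_img_def by (rule h.derived_img[OF subgroup.subset[OF M]])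
  also have "\<dots> = (\<lambda>a. N #> a) ` (derived G M <#> N)"
    using h.set_mult_ker_hom(1)[OF derived_in_carrier[OF subgroup.subset[OF M]]] kernel by simp
  finally show ?thesis unfolding cover quot_img_def .
qed

end

definition residual_centralizer :: "'a monoid \<Rightarrow> 'a set \<Rightarrow> 'a set \<Rightarrow> 'a set \<Rightarrow> 'a set set"
  where "residual_centralizer G H T Z =
    sol_res ((sect G H Z)\<lparr>carrier := centralizer (sect G H Z) (quot_img G T Z)\<rparr>)"

context plain_group
begin

lemma derived_subset_if_commutators:
  assumes "subgroup K G" "\<And>a b. a \<in> S \<Longrightarrow> b \<in> S \<Longrightarrow> a \<otimes> b \<otimes> inv a \<otimes> inv b \<in> K"
  shows "derived G S \<subseteq> K"
  unfolding derived_def using assms by (intro generate_subgroup_incl) auto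

lemma commutator_rcos:
  assumes N: "N \<lhd> G" and a: "a \<in> carrier G" and b: "b \<in> carrier G"
  shows "(N #> a) \<otimes>\<^bsub>G Mod N\<^esub> (N #> b) \<otimes>\<^bsub>G Mod N\<^esub> inv\<^bsub>G Mod N\<^esub> (N #> a) \<otimes>\<^bsub>G Mod N\<^esub>
    inv\<^bsub>G Mod N\<^esub> (N #> b) = N #> (a \<otimes> b \<otimes> inv a \<otimes> inv b)"
proof -
  interpret h: group_hom G "G Mod N" "\<lambda>a. N #> a" by (rule group_hom_rcos[OF N])
  show ?thesis using a b h.hom_mult h.hom_inv by simp
qed

lemma centralizer_sect:
  "centralizer (sect G H Z) S = {U \<in> quot_img G H Z. \<forall>V \<in> S. U <#> V = V <#> U}"
  unfolding centralizer_def sect_carrier sect_mult ..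

lemma sect_restrict: "(sect G H Z)\<lparr>carrier := C\<rparr> = (G Mod Z)\<lparr>carrier := C\<rparr>"
  by (simp add: sect_eq)

lemma centralizer_sect_normal:
  assumes "Z \<lhd> G" "H \<lhd> G" "T \<lhd> G"
  shows "centralizer (sect G H Z) (quot_img G T Z) \<lhd> G Mod Z"
proof -
  interpret Q: plain_group "G Mod Z"
    unfolding plain_group_def by (rule normal.factorgroup_is_group[OF assms(1)])
  show ?thesis
    unfolding sect_eq by (rule Q.centralizer_restrict_normal[OF quot_img_normal quot_img_normal]) (use assms in auto)
qed

lemma residual_centralizer:
  assumes fin: "finite (carrier G)" and Z: "Z \<lhd> G" and H: "H \<lhd> G" and T: "T \<lhd> G"
  defines "C \<equiv> centralizer (sect G H Z) (quot_img G T Z)"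
  shows "residual_centralizer G H T Z \<lhd> G Mod Z"
    and "residual_centralizer G H T Z \<subseteq> derived (G Mod Z) C"
    and "residual_centralizer G H T Z \<subseteq> derived (G Mod Z) (residual_centralizer G H T Z)"
    and "P \<subseteq> C \<Longrightarrow> derived (G Mod Z) P = P \<Longrightarrow> P \<subseteq> residual_centralizer G H T Z"
proof -
  interpret Q: plain_group "G Mod Z"
    unfolding plain_group_def by (rule normal.factorgroup_is_group[OF Z])
  have finQ: "finite (carrier (G Mod Z))" using fin by (simp add: carrier_FactGroup)
  have nC: "C \<lhd> G Mod Z" unfolding C_def by (rule centralizer_sect_normal[OF Z H T])
  have R: "residual_centralizer G H T Z = sol_res ((G Mod Z)\<lparr>carrier := C\<rparr>)"
    unfolding residual_centralizer_def C_def sect_restrict ..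
  show "residual_centralizer G H T Z \<lhd> G Mod Z"
    unfolding R by (rule Q.sol_res_subgroup_normal[OF finQ nC])
  show "residual_centralizer G H T Z \<subseteq> derived (G Mod Z) C"
    unfolding R by (rule Q.sol_res_subgroup_subset_derived[OF finQ normal_imp_subgroup[OF nC]])
  show "residual_centralizer G H T Z \<subseteq> derived (G Mod Z) (residual_centralizer G H T Z)"
    unfolding R by (rule Q.sol_res_subgroup_perfect[OF finQ normal_imp_subgroup[OF nC]])
  show "P \<subseteq> C \<Longrightarrow> derived (G Mod Z) P = P \<Longrightarrow> P \<subseteq> residual_centralizer G H T Z"
    unfolding R by (rule Q.perfect_subset_sol_res_subgroup[OF finQ normal_imp_subgroup[OF nC]])
qed

lemma residual_centralizer_subset:
  assumes fin: "finite (carrier G)" and Z: "Z \<lhd> G" and H: "H \<lhd> G" and T: "T \<lhd> G"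
  shows "residual_centralizer G H T Z \<subseteq> centralizer (sect G H Z) (quot_img G T Z)"
proof -
  interpret Q: plain_group "G Mod Z"
    unfolding plain_group_def by (rule normal.factorgroup_is_group[OF Z])
  show ?thesis
    using residual_centralizer(2)[OF fin Z H T]
      Q.derived_incl[OF subset_refl normal_imp_subgroup[OF centralizer_sect_normal[OF Z H T]]] by blast
qed

text \<open>A perfect group centralising itself is trivial.\<close>

lemma residual_centralizer_trivial:
  assumes fin: "finite (carrier G)" and Z: "Z \<lhd> G" and H: "H \<lhd> G" and T: "T \<lhd> G"
    and RT: "residual_centralizer G H T Z \<subseteq> quot_img G T Z"
  shows "residual_centralizer G H T Z \<subseteq> {Z}"
proof -
  interpret Q: plain_group "G Mod Z"
    unfolding plain_group_def by (rule normal.factorgroup_is_group[OF Z])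
  let ?R = "residual_centralizer G H T Z"
  have sR: "subgroup ?R (G Mod Z)" by (rule normal_imp_subgroup[OF residual_centralizer(1)[OF fin Z H T]])
  have "derived (G Mod Z) ?R \<subseteq> {\<one>\<^bsub>G Mod Z\<^esub>}"
  proof (rule Q.derived_subset_if_commutators[OF Q.triv_subgroup])
    fix U V assume U: "U \<in> ?R" and V: "V \<in> ?R"
    have "U <#> V = V <#> U"
      using residual_centralizer_subset[OF fin Z H T] U V RT unfolding centralizer_sect by blast
    hence "U \<otimes>\<^bsub>G Mod Z\<^esub> V \<otimes>\<^bsub>G Mod Z\<^esub> inv\<^bsub>G Mod Z\<^esub> U \<otimes>\<^bsub>G Mod Z\<^esub> inv\<^bsub>G Mod Z\<^esub> V = \<one>\<^bsub>G Mod Z\<^esub>"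
      using Q.commutator_eq_one_if_commute[OF subgroup.mem_carrier[OF sR U] subgroup.mem_carrier[OF sR V]]
      by simp
    thus "U \<otimes>\<^bsub>G Mod Z\<^esub> V \<otimes>\<^bsub>G Mod Z\<^esub> inv\<^bsub>G Mod Z\<^esub> U \<otimes>\<^bsub>G Mod Z\<^esub> inv\<^bsub>G Mod Z\<^esub> V \<in> {\<one>\<^bsub>G Mod Z\<^esub>}"
      by blast
  qed
  thus ?thesis using residual_centralizer(3)[OF fin Z H T] by simp
qed

end

context plain_group
begin

lemma quot_img_subset_centralizer:
  assumes M: "M \<lhd> G" and T: "T \<lhd> G" and Z: "Z \<lhd> G" and MH: "M \<subseteq> H" and MT: "M \<inter> T \<subseteq> Z"
  shows "quot_img G M Z \<subseteq> centralizer (sect G H Z) (quot_img G T Z)"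
proof
  fix U assume "U \<in> quot_img G M Z"
  then obtain m where m: "m \<in> M" "U = Z #> m" by (rule quot_imgE)
  have mc: "m \<in> carrier G" using subgroup.mem_carrier[OF normal_imp_subgroup[OF M] m(1)] .
  have "U <#> V = V <#> U" if V: "V \<in> quot_img G T Z" for V
  proof -
    obtain t where t: "t \<in> T" "V = Z #> t" using V by (rule quot_imgE)
    have tc: "t \<in> carrier G" using subgroup.mem_carrier[OF normal_imp_subgroup[OF T] t(1)] .
    have "m \<otimes> t \<otimes> inv m \<otimes> inv t \<in> T"
      using subgroup.m_closed[OF normal_imp_subgroup[OF T] normal.inv_op_closed2[OF T mc t(1)]
          subgroup.m_inv_closed[OF normal_imp_subgroup[OF T] t(1)]] .
    moreover have "m \<otimes> (t \<otimes> inv m \<otimes> inv t) \<in> M"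
      using subgroup.m_closed[OF normal_imp_subgroup[OF M] m(1)
          normal.inv_op_closed2[OF M tc subgroup.m_inv_closed[OF normal_imp_subgroup[OF M] m(1)]]] .
    ultimately have "m \<otimes> t \<otimes> inv m \<otimes> inv t \<in> M \<inter> T" using mc tc by (simp add: m_assoc)
    hence "m \<otimes> t \<otimes> inv m \<otimes> inv t \<in> Z" using MT by blast
    thus ?thesis unfolding m(2) t(2) using rcos_commute_iff[OF Z mc tc] by simp
  qed
  thus "U \<in> centralizer (sect G H Z) (quot_img G T Z)"
    unfolding centralizer_sect using m MH unfolding quot_img_def by blast
qed

lemma centralizer_rep_in_factor:
  assumes Z1: "Z1 \<lhd> G" and Z2: "Z2 \<lhd> G" and T: "T \<lhd> G" and H: "H = Z2 <#> T"
    and Z2C: "quot_img G Z2 Z1 \<subseteq> centralizer (sect G H Z1) (quot_img G T Z1)"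
    and h: "h \<in> H" "Z1 #> h \<in> centralizer (sect G H Z1) (quot_img G T Z1)"
  obtains t where "t \<in> T" "Z2 #> h = Z2 #> t" "Z1 #> t \<in> centralizer (sect G H Z1) (quot_img G T Z1)"
proof -
  let ?C = "centralizer (sect G H Z1) (quot_img G T Z1)"
  have sC: "subgroup ?C (G Mod Z1)"
    using normal_imp_subgroup[OF centralizer_sect_normal[OF Z1 _ T]] normal_subgroup_set_mult_closed[OF Z2 T] H
    by simp
  obtain z t where zt: "z \<in> Z2" "t \<in> T" "h = z \<otimes> t" using h(1) unfolding H by (rule set_mult_memE)
  have zc: "z \<in> carrier G" and tc: "t \<in> carrier G"
    using subgroup.mem_carrier[OF normal_imp_subgroup[OF Z2] zt(1)]
      subgroup.mem_carrier[OF normal_imp_subgroup[OF T] zt(2)] by auto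
  have "h \<otimes> inv t \<in> Z2" using zt zc tc by (simp add: m_assoc)
  hence "Z2 #> h = Z2 #> t" using rcos_eq_iff[OF normal_imp_subgroup[OF Z2] _ tc] zt(3) zc tc by simp
  moreover have "Z1 #> t = (Z1 #> inv z) <#> (Z1 #> h)"
    using normal.rcos_sum[OF Z1, of "inv z" h] zt(3) zc tc by (simp add: inv_mult_cancel_left)
  moreover have "Z1 #> inv z \<in> ?C"
    using Z2C subgroup.m_inv_closed[OF normal_imp_subgroup[OF Z2] zt(1)] unfolding quot_img_def by blast
  ultimately show ?thesis using that zt(2) subgroup.m_closed[OF sC _ h(2)] by simp
qed

lemma derived_centralizer_subset:
  assumes Z1: "Z1 \<lhd> G" and Z2: "Z2 \<lhd> G" and T: "T \<lhd> G" and H: "H = Z2 <#> T"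
    and Z12: "Z1 \<subseteq> Z2" and Z2T: "Z2 \<inter> T \<subseteq> Z1"
  shows "derived (G Mod Z1) (centralizer (sect G H Z1) (quot_img G T Z1)) \<subseteq> quot_img G Z2 Z1"
proof -
  let ?C = "centralizer (sect G H Z1) (quot_img G T Z1)"
  interpret Q: plain_group "G Mod Z1"
    unfolding plain_group_def by (rule normal.factorgroup_is_group[OF Z1])
  have nH: "H \<lhd> G" unfolding H by (rule normal_subgroup_set_mult_closed[OF Z2 T])
  have Z2H: "Z2 \<subseteq> H"
    unfolding H by (rule set_mult_subgroup_left[OF normal_imp_subgroup[OF T] subgroup.subset[OF normal_imp_subgroup[OF Z2]]])
  have Z2C: "quot_img G Z2 Z1 \<subseteq> ?C" by (rule quot_img_subset_centralizer[OF Z2 T Z1 Z2H Z2T])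
  show ?thesis
  proof (rule Q.derived_subset_if_commutators[OF normal_imp_subgroup[OF quot_img_normal[OF Z1 Z2]]])
    fix U V assume U: "U \<in> ?C" and V: "V \<in> ?C"
    obtain h where h: "h \<in> H" "U = Z1 #> h" using U unfolding centralizer_sect by (blast elim: quot_imgE)
    obtain k where k: "k \<in> H" "V = Z1 #> k" using V unfolding centralizer_sect by (blast elim: quot_imgE)
    have hc: "h \<in> carrier G" and kc: "k \<in> carrier G"
      using subgroup.mem_carrier[OF normal_imp_subgroup[OF nH]] h(1) k(1) by auto
    obtain t where t: "t \<in> T" "Z2 #> h = Z2 #> t" "Z1 #> t \<in> ?C"
      using centralizer_rep_in_factor[OF Z1 Z2 T H Z2C h(1)] U h(2) by blast
    obtain t' where t': "t' \<in> T" "Z2 #> k = Z2 #> t'"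
      using centralizer_rep_in_factor[OF Z1 Z2 T H Z2C k(1)] V k(2) by blast
    have tc: "t \<in> carrier G" and t'c: "t' \<in> carrier G"
      using subgroup.mem_carrier[OF normal_imp_subgroup[OF T]] t(1) t'(1) by auto
    have "(Z1 #> t) <#> (Z1 #> t') = (Z1 #> t') <#> (Z1 #> t)"
      using t(3) t'(1) unfolding centralizer_sect quot_img_def by blast
    hence "t \<otimes> t' \<otimes> inv t \<otimes> inv t' \<in> Z2" using rcos_commute_iff[OF Z1 tc t'c] Z12 by blast
    hence "h \<otimes> k \<otimes> inv h \<otimes> inv k \<in> Z2"
      using rcos_commute_iff[OF Z2 tc t'c] rcos_commute_iff[OF Z2 hc kc] t(2) t'(2) by simp
    thus "U \<otimes>\<^bsub>G Mod Z1\<^esub> V \<otimes>\<^bsub>G Mod Z1\<^esub> inv\<^bsub>G Mod Z1\<^esub> U \<otimes>\<^bsub>G Mod Z1\<^esub> inv\<^bsub>G Mod Z1\<^esub> V \<in> quot_img G Z2 Z1"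
      unfolding h(2) k(2) commutator_rcos[OF Z1 hc kc] quot_img_def by blast
  qed
qed

lemma residual_centralizer_eq:
  assumes fin: "finite (carrier G)" and Z1: "Z1 \<lhd> G" and Z2: "Z2 \<lhd> G" and T: "T \<lhd> G"
    and ch: "chief_factor G Z2 Z1" and Z2T: "Z2 \<inter> T = Z1" and H: "H = Z2 <#> T"
    and nonabelian: "\<not> comm_group (sect G H T)"
  shows "residual_centralizer G H T Z1 = quot_img G Z2 Z1"
proof
  have nH: "H \<lhd> G" unfolding H by (rule normal_subgroup_set_mult_closed[OF Z2 T])
  have Z2H: "Z2 \<subseteq> H"
    unfolding H by (rule set_mult_subgroup_left[OF normal_imp_subgroup[OF T] subgroup.subset[OF normal_imp_subgroup[OF Z2]]])
  show "residual_centralizer G H T Z1 \<subseteq> quot_img G Z2 Z1"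
    using residual_centralizer(2)[OF fin Z1 nH T]
      derived_centralizer_subset[OF Z1 Z2 T H chief_factorD(3)[OF ch]] Z2T by blast
  have "\<not> derived G Z2 \<subseteq> Z1"
    using comm_group_sect_if_derived_subset[OF T Z2 H] nonabelian Z2T by blast
  hence "derived (G Mod Z1) (quot_img G Z2 Z1) = quot_img G Z2 Z1"
    by (intro derived_quot_img_cover[OF Z1 normal_imp_subgroup[OF Z2]] chief_factor_derived_cover[OF ch])
  thus "quot_img G Z2 Z1 \<subseteq> residual_centralizer G H T Z1"
    using residual_centralizer(4)[OF fin Z1 nH T] quot_img_subset_centralizer[OF Z2 T Z1 Z2H] Z2T by blast
qed

end

context plain_group
begin

lemma Union_residual_centralizer:
  assumes fin: "finite (carrier G)" and Z: "Z \<lhd> G" and H: "H \<lhd> G" and T: "T \<lhd> G"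
    and ZT: "Z \<subseteq> T" and TH: "T \<subseteq> H"
  defines "C \<equiv> \<Union> (residual_centralizer G H T Z)"
  shows "C \<lhd> G" "Z \<subseteq> C" "C \<subseteq> H" "quot_img G C Z = residual_centralizer G H T Z"
proof -
  let ?R = "residual_centralizer G H T Z"
  have nR: "?R \<lhd> G Mod Z" by (rule residual_centralizer(1)[OF fin Z H T])
  show "C \<lhd> G" unfolding C_def by (rule normal.factgroup_subgroup_union_normal[OF Z nR])
  show "quot_img G C Z = ?R" unfolding C_def by (rule quot_img_Union[OF Z normal_imp_subgroup[OF nR]])
  have "Z \<in> ?R" using subgroup.one_closed[OF normal_imp_subgroup[OF nR]] by simp
  thus "Z \<subseteq> C" unfolding C_def by blast
  have "?R \<subseteq> quot_img G H Z"
    using residual_centralizer_subset[OF fin Z H T] unfolding centralizer_sect by blast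
  hence "C \<subseteq> \<Union> (quot_img G H Z)" unfolding C_def by blast
  also have "\<dots> = H" using Union_quot_img[OF Z normal_imp_subgroup[OF H]] ZT TH by blast
  finally show "C \<subseteq> H" .
qed

text \<open>If the soluble residual \<open>C/Z\<close> of \<open>C\<^bsub>H/Z\<^esub>(T/Z)\<close> has the order of the chief
  factor \<open>H/T\<close>, then \<open>C/Z\<close> is itself a chief factor, \<open>G\<close>-isomorphic to \<open>H/T\<close>: it cannot lie
  in the abelian group \<open>T/Z\<close>, so \<open>CT = H\<close>, and comparing orders gives \<open>C \<inter> T = Z\<close>.\<close>

lemma residual_centralizer_chief_factor:
  assumes fin: "finite (carrier G)" and Z: "Z \<lhd> G" and ch: "chief_factor G H T" and ZT: "Z \<subseteq> T"
    and card: "card (residual_centralizer G H T Z) = card (carrier (sect G H T))"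
  defines "C \<equiv> \<Union> (residual_centralizer G H T Z)"
  shows "chief_factor G C Z" "G_isomorphic G C Z H T"
proof -
  note HT = chief_factorD[OF ch]
  note C = Union_residual_centralizer[OF fin Z HT(1,2) ZT HT(3), folded C_def]
  have sC: "subgroup C G" and sT: "subgroup T G" using C(1) HT(2) normal_imp_subgroup by auto
  have "\<not> C \<subseteq> T"
  proof
    assume "C \<subseteq> T"
    hence "residual_centralizer G H T Z \<subseteq> {Z}"
      using residual_centralizer_trivial[OF fin Z HT(1,2)] C(4) unfolding quot_img_def by blast
    hence "card (residual_centralizer G H T Z) \<le> 1" by (simp add: card_mono[of "{Z}", simplified])
    thus False using card card_sect_ge_two[OF fin ch] by simp
  qed
  moreover have "C <#> T = T \<or> C <#> T = H"
    using chief_factor_maximal[OF ch normal_subgroup_set_mult_closed[OF C(1) HT(2)]]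
      set_mult_subgroup_right[OF sC subgroup.subset[OF sT]] set_mult_subset_subgroup[OF normal_imp_subgroup[OF HT(1)] C(3) HT(3)]
    by blast
  moreover have "C \<subseteq> C <#> T" by (rule set_mult_subgroup_left[OF sT subgroup.subset[OF sC]])
  ultimately have CT: "C <#> T = H" by blast
  have "perspective G C (C \<inter> T) T"
    unfolding perspective_def perspective_axioms_def plain_group_def
    using is_group C(1) HT(2) normal_subgroup_intersect[OF C(1) HT(2)] by blast
  then interpret perspective G C "C \<inter> T" T .
  have iso: "G_isomorphic G C (C \<inter> T) H T" using G_isomorphic CT by simp
  have finC: "finite C" using finite_subset[OF subgroup.subset[OF sC] fin] .
  have "card (quot_img G C (C \<inter> T)) * card (C \<inter> T) = card C"
    by (rule card_quot_img_mult_card[OF fin sC normal_imp_subgroup[OF normal_subgroup_intersect[OF C(1) HT(2)]]]) blast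
  moreover have "card (quot_img G C Z) * card Z = card C"
    by (rule card_quot_img_mult_card[OF fin sC normal_imp_subgroup[OF Z] C(2)])
  moreover have "card (quot_img G C (C \<inter> T)) = card (quot_img G C Z)"
    using card_sect_eq_if_G_isomorphic[OF iso] card C(4) unfolding sect_carrier by simp
  moreover have "card (quot_img G C Z) > 0"
    using finC subgroup.one_closed[OF sC] unfolding quot_img_def by (auto simp: card_gt_0_iff)
  ultimately have "card Z = card (C \<inter> T)" by (metis mult_left_cancel not_gr0)
  hence "Z = C \<inter> T" using card_subset_eq[of "C \<inter> T" Z] finC C(2) ZT by blast
  thus "chief_factor G C Z" "G_isomorphic G C Z H T" using chief_factor_iff CT ch iso by simp_all
qed

end

text \<open>The setting of the theorem: \<open>f0\<close> and \<open>f1\<close> are the values of one chief factor function on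
  groups of type \<open>'a monoid\<close> and on their quotients, of type \<open>'a set monoid\<close>; \<open>ZK\<close> is the
  preimage in \<open>G\<close> of \<open>Z(G/K, f)\<close>.\<close>

locale hypercentre_quotient = plain_group +
  fixes f0 :: "'a monoid \<Rightarrow> 'a set \<Rightarrow> 'a set \<Rightarrow> bool"
    and f1 :: "'a set monoid \<Rightarrow> 'a set set \<Rightarrow> 'a set set \<Rightarrow> bool"
    and K :: "'a set"
  assumes cff: "chief_factor_function f0 f1" and fin: "finite (carrier G)" and K: "K \<lhd> G"
begin

definition ZK :: "'a set" where "ZK = \<Union> (ZF (G Mod K) f1)"

lemma finite_quotient: "finite (carrier (G Mod K))"
  using fin by (simp add: carrier_FactGroup)

lemma f0_invariant: "chief_iso_invariant G f0"
  using cff is_group fin unfolding chief_factor_function_def cff_iso_invariant_def chief_iso_invariant_def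
  by blast

lemma f1_invariant: "chief_iso_invariant (G Mod K) f1"
  using cff normal.factorgroup_is_group[OF K] finite_quotient
  unfolding chief_factor_function_def cff_iso_invariant_def chief_iso_invariant_def by blast

lemma f1_quot_img: "chief_factor G A B \<Longrightarrow> K \<subseteq> B \<Longrightarrow> f1 (G Mod K) (quot_img G A K) (quot_img G B K) = f0 G A B"
  using cff is_group fin K unfolding chief_factor_function_def cff_quot_compat_def by blast

interpretation Q: plain_group "G Mod K"
  unfolding plain_group_def by (rule normal.factorgroup_is_group[OF K])

lemma ZF_quotient:
  "f_hypercentral (G Mod K) f1 (ZF (G Mod K) f1)"
  "f_hypercentral (G Mod K) f1 \<N> \<Longrightarrow> \<N> \<subseteq> ZF (G Mod K) f1"
  using Q.f_hypercentral_ZF[OF finite_quotient f1_invariant] by blast+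

lemma ZF_quotient_normal: "ZF (G Mod K) f1 \<lhd> G Mod K"
  using ZF_quotient(1) unfolding f_hypercentral_def by blast

lemma ZK_normal: "ZK \<lhd> G"
  unfolding ZK_def by (rule normal.factgroup_subgroup_union_normal[OF K ZF_quotient_normal])

lemma quot_img_ZK: "quot_img G ZK K = ZF (G Mod K) f1"
  unfolding ZK_def by (rule quot_img_Union[OF K normal_imp_subgroup[OF ZF_quotient_normal]])

lemma K_subset_ZK: "K \<subseteq> ZK"
  using subgroup.one_closed[OF normal_imp_subgroup[OF ZF_quotient_normal]] unfolding ZK_def by auto

lemma Union_ZF_Int_quot_img:
  assumes S: "S \<lhd> G" and KS: "K \<subseteq> S"
  shows "\<Union> (ZF (G Mod K) f1 \<inter> quot_img G S K) = S \<inter> ZK"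
proof -
  have "ZF (G Mod K) f1 \<inter> quot_img G S K = quot_img G (ZK \<inter> S) K"
    unfolding quot_img_ZK[symmetric]
    by (rule quot_img_Int[OF K normal_imp_subgroup[OF ZK_normal] normal_imp_subgroup[OF S] KS])
  also have "\<Union> \<dots> = ZK \<inter> S"
    using Union_quot_img[OF K normal_imp_subgroup[OF normal_subgroup_intersect[OF ZK_normal S]]]
      K_subset_ZK KS by blast
  finally show ?thesis by blast
qed

lemma f0_below_ZK:
  assumes ch: "chief_factor G A B" and KB: "K \<subseteq> B" and AZ: "A \<subseteq> ZK"
  shows "f0 G A B"
proof -
  have "quot_img G A K \<subseteq> ZF (G Mod K) f1" using AZ quot_img_ZK unfolding quot_img_def by blast
  hence "f1 (G Mod K) (quot_img G A K) (quot_img G B K)"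
    using ZF_quotient(1) chief_factor_quot_img[OF K ch KB] unfolding f_hypercentral_def by blast
  thus ?thesis using f1_quot_img[OF ch KB] by simp
qed

lemma subset_ZK_if_f0:
  assumes ch: "chief_factor G M N" and KN: "K \<subseteq> N" and NZ: "N \<subseteq> ZK" and f0: "f0 G M N"
  shows "M \<subseteq> ZK"
proof -
  note MN = chief_factorD[OF ch]
  have "f_hypercentral (G Mod K) f1 (quot_img G N K)"
    using f_hypercentral_subset[OF ZF_quotient(1) quot_img_normal[OF K MN(2)]] NZ quot_img_ZK
    unfolding quot_img_def by blast
  hence "f_hypercentral (G Mod K) f1 (quot_img G M K)"
    using Q.f_hypercentral_extend[OF f1_invariant _ chief_factor_quot_img[OF K ch KN]] f1_quot_img[OF ch KN] f0
    by simp
  hence "quot_img G M K \<subseteq> quot_img G ZK K" using ZF_quotient(2) quot_img_ZK by simp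
  hence "\<Union> (quot_img G M K) \<subseteq> \<Union> (quot_img G ZK K)" by (rule Union_mono)
  moreover have "\<Union> (quot_img G M K) = M"
    using Union_quot_img[OF K normal_imp_subgroup[OF MN(1)]] KN MN(3) by blast
  moreover have "\<Union> (quot_img G ZK K) = ZK"
    by (rule Union_quot_img[OF K normal_imp_subgroup[OF ZK_normal] K_subset_ZK])
  ultimately show ?thesis by simp
qed

end

locale nonabelian_chief_factor = hypercentre_quotient +
  fixes H T :: "'a set"
  assumes chief: "chief_factor G H T" and nonabelian: "\<not> comm_group (sect G H T)" and KT: "K \<subseteq> T"
begin

lemma T_Int_ZK_normal: "T \<inter> ZK \<lhd> G"
  by (rule normal_subgroup_intersect[OF chief_factorD(2)[OF chief] ZK_normal])

lemma H_Int_ZK_split: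
  assumes "H \<inter> ZK \<noteq> T \<inter> ZK"
  shows "chief_factor G (H \<inter> ZK) (T \<inter> ZK)" "G_isomorphic G (H \<inter> ZK) (T \<inter> ZK) H T"
    "H = (H \<inter> ZK) <#> T"
proof -
  have "\<not> H \<inter> ZK \<subseteq> T" using assms chief_factorD(3)[OF chief] by blast
  thus "chief_factor G (H \<inter> ZK) (T \<inter> ZK)" "G_isomorphic G (H \<inter> ZK) (T \<inter> ZK) H T"
    "H = (H \<inter> ZK) <#> T"
    using chief_factor_Int_normal[OF chief ZK_normal] by auto
qed

lemma Int_ZK_eq_if_not_f0:
  assumes "\<not> f0 G H T"
  shows "H \<inter> ZK = T \<inter> ZK"
proof (rule ccontr)
  assume ne: "H \<inter> ZK \<noteq> T \<inter> ZK"
  note split = H_Int_ZK_split[OF ne]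
  have "f0 G (H \<inter> ZK) (T \<inter> ZK)" by (rule f0_below_ZK[OF split(1)]) (use KT K_subset_ZK in auto)
  thus False using chief_iso_invariantD[OF f0_invariant split(1) chief split(2)] assms by simp
qed

lemma residual_centralizer_if_Int_ZK_ne:
  assumes "H \<inter> ZK \<noteq> T \<inter> ZK"
  shows "residual_centralizer G H T (T \<inter> ZK) = quot_img G (H \<inter> ZK) (T \<inter> ZK)"
    "\<Union> (residual_centralizer G H T (T \<inter> ZK)) = H \<inter> ZK"
    "card (residual_centralizer G H T (T \<inter> ZK)) = card (carrier (sect G H T))"
proof -
  note split = H_Int_ZK_split[OF assms]
  have nZ2: "H \<inter> ZK \<lhd> G" by (rule normal_subgroup_intersect[OF chief_factorD(1)[OF chief] ZK_normal])
  have "(H \<inter> ZK) \<inter> T = T \<inter> ZK" using chief_factorD(3)[OF chief] by blast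
  thus R: "residual_centralizer G H T (T \<inter> ZK) = quot_img G (H \<inter> ZK) (T \<inter> ZK)"
    using residual_centralizer_eq[OF fin T_Int_ZK_normal nZ2 chief_factorD(2)[OF chief] split(1) _ split(3)]
      nonabelian split(3) by simp
  show "\<Union> (residual_centralizer G H T (T \<inter> ZK)) = H \<inter> ZK"
    unfolding R using Union_quot_img[OF T_Int_ZK_normal normal_imp_subgroup[OF nZ2]]
      chief_factorD(3)[OF chief] by blast
  show "card (residual_centralizer G H T (T \<inter> ZK)) = card (carrier (sect G H T))"
    using card_sect_eq_if_G_isomorphic[OF split(2)] unfolding R sect_carrier .
qed

lemma Int_ZK_ne_if_card_eq:
  assumes f0: "f0 G H T"
    and card: "card (residual_centralizer G H T (T \<inter> ZK)) = card (carrier (sect G H T))"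
  shows "H \<inter> ZK \<noteq> T \<inter> ZK"
proof
  assume eq: "H \<inter> ZK = T \<inter> ZK"
  let ?C = "\<Union> (residual_centralizer G H T (T \<inter> ZK))"
  note C = residual_centralizer_chief_factor[OF fin T_Int_ZK_normal chief _ card]
  have "f0 G ?C (T \<inter> ZK)" using chief_iso_invariantD[OF f0_invariant C(1) chief C(2)] f0 by simp
  hence "?C \<subseteq> ZK" using subset_ZK_if_f0[OF C(1)] KT K_subset_ZK by blast
  moreover have "?C \<subseteq> H"
    using Union_residual_centralizer(3)[OF fin T_Int_ZK_normal chief_factorD(1,2)[OF chief]]
      chief_factorD(3)[OF chief] by blast
  ultimately have "?C \<subseteq> T \<inter> ZK" using eq by blast
  thus False using chief_factorD(3,4)[OF C(1)] by blast
qed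

end

theorem mainTheorem4:
  fixes G :: "'a monoid"
    and f0 :: "'a monoid \<Rightarrow> 'a set \<Rightarrow> 'a set \<Rightarrow> bool"
    and f1 :: "'a set monoid \<Rightarrow> 'a set set \<Rightarrow> 'a set set \<Rightarrow> bool"
    and K H T :: "'a set"
  assumes f: "chief_factor_function f0 f1"
    and G: "group G" "finite (carrier G)"
    and K: "K \<lhd> G"
    and HT: "chief_factor G H T" "\<not> comm_group (sect G H T)"
    and KT: "K \<subseteq> T"
  defines "Z1 \<equiv> \<Union> (ZF (FactGroup G K) f1 \<inter> quot_img G T K)"
    and "Z2 \<equiv> \<Union> (ZF (FactGroup G K) f1 \<inter> quot_img G H K)"
  defines "Q \<equiv> sect G H Z1"
  defines "R \<equiv> sol_res (Q\<lparr>carrier := centralizer Q (quot_img G T Z1)\<rparr>)"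
  defines "C \<equiv> \<Union> R"
  shows "(\<not> f0 G H T \<longrightarrow> Z2 = Z1) \<and>
         (f0 G H T \<longrightarrow> ((Z2 \<noteq> Z1 \<longleftrightarrow> card R = card (carrier (sect G H T))) \<and>
                         (Z2 \<noteq> Z1 \<longrightarrow> Z2 = C)))"
proof -
  interpret nonabelian_chief_factor G f0 f1 K H T
    using f G K HT KT
    by (simp add: nonabelian_chief_factor_def nonabelian_chief_factor_axioms_def plain_group_def
        hypercentre_quotient_def hypercentre_quotient_axioms_def)
  have Z1: "Z1 = T \<inter> ZK" unfolding Z1_def using Union_ZF_Int_quot_img[OF chief_factorD(2)[OF HT(1)] KT] .
  have Z2: "Z2 = H \<inter> ZK"
    unfolding Z2_def using Union_ZF_Int_quot_img[OF chief_factorD(1)[OF HT(1)]] KT chief_factorD(3)[OF HT(1)]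
    by blast
  have R: "R = residual_centralizer G H T (T \<inter> ZK)" unfolding R_def Q_def Z1 residual_centralizer_def ..
  show ?thesis
    unfolding C_def R Z1 Z2
    using Int_ZK_eq_if_not_f0 residual_centralizer_if_Int_ZK_ne Int_ZK_ne_if_card_eq by blast
qed

end
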